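(* Let $F$ be a field and $f\in F[t]$ a monic irreducible polynomial of degree $d\ge1$. Then $B_f(F(t))$ is generated, as a $\mathbb{Q}$-vector space, by $B_{d-1}(F(t))$ together with the elements $\{x_f(a,b)\}_2$, $a,b\in (F[t]/(f))^*$.
   Context: For a field $K$, $K^*$ means $K^*\otimes_{\mathbb{Z}}\mathbb{Q}$, exterior powers are over $\mathbb{Q}$. $B_2(K)=\mathbb{Q}[\mathbb{P}^1(K)]/R_2(K)$ with $\mathbb{Q}[\mathbb{P}^1(K)]$ having basis $\{x\}_2$, $x\in\mathbb{P}^1(K)$, and $R_2(K)$ spanned by $\{0\}_2,\{\infty\}_2$ and $\sum_{i=1}^5(-1)^i\{r(x_1,\dots,\hat x_i,\dots,x_5)\}_2$ (pairwise distinct $x_j$, $r(a,b,c,d)=\frac{(a-b)(c-d)}{(c-b)(a-d)}$); $\delta_2(\{x\}_2)=x\wedge(1-x)$. For $e\ge 0$, $V_e\subset F(t)^*\otimes\mathbb{Q}$ is the span of nonzero polynomials of degree $\le e$, and $B_e(F(t))=\{y\in B_2(F(t)):\delta_2(y)\in\bigwedge^2V_e\}$. $F(t)^*_f$ is the span of $V_{d-1}$ and $f$, and $B_f(F(t))=\{y\in B_2(F(t)):\delta_2(y)\in\bigwedge^2F(t)^*_f\}$ (so $B_{d-1}(F(t))\subset B_f(F(t))$). For nonzero $a,b\in F[t]/(f)$: with $\overline a,\overline b$ the representatives of degree $<d$ and $r\ne0$ the remainder of $\overline a\,\overline b$ modulo $f$, $x_f(a,b)=\overline a\,\overline b/r\in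 F(t)^*$. *)

theory Defs
  imports "HOL-Computational_Algebra.Polynomial" "HOL-Computational_Algebra.Fraction_Field"
begin

text \<open>Q-vector spaces are modelled as rational-valued functions with pointwise operations
(free Q-vector spaces = finitely supported functions); subspaces of quotients are represented
by their preimages.\<close>

definition vzero :: "'b \<Rightarrow> rat" where "vzero = (\<lambda>_. 0)"
definition vadd :: "('b \<Rightarrow> rat) \<Rightarrow> ('b \<Rightarrow> rat) \<Rightarrow> 'b \<Rightarrow> rat" where
  "vadd u v = (\<lambda>x. u x + v x)"
definition vsub :: "('b \<Rightarrow> rat) \<Rightarrow> ('b \<Rightarrow> rat) \<Rightarrow> 'b \<Rightarrow> rat" where
  "vsub u v = (\<lambda>x. u x - v x)"
definition vscale :: "rat \<Rightarrow> ('b \<Rightarrow> rat) \<Rightarrow> 'b \<Rightarrow> rat" where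
  "vscale c v = (\<lambda>x. c * v x)"
definition bas :: "'b \<Rightarrow> 'b \<Rightarrow> rat" where
  "bas b = (\<lambda>x. if x = b then 1 else 0)"

definition fin_supp :: "('b \<Rightarrow> rat) \<Rightarrow> bool" where
  "fin_supp v \<longleftrightarrow> finite {x. v x \<noteq> 0}"

inductive_set qspan :: "('b \<Rightarrow> rat) set \<Rightarrow> ('b \<Rightarrow> rat) set" for S where
  zero: "vzero \<in> qspan S"
| gen: "v \<in> S \<Longrightarrow> v \<in> qspan S"
| add: "u \<in> qspan S \<Longrightarrow> v \<in> qspan S \<Longrightarrow> vadd u v \<in> qspan S"
| scale: "v \<in> qspan S \<Longrightarrow> vscale c v \<in> qspan S"

type_synonym 'a ratfun = "'a poly fract"

definition pfr :: "'a::field poly \<Rightarrow> 'a ratfun" where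
  "pfr p = Fract p 1"

text \<open>Exterior square of K^* tensor Q, as Q[K^x \<times> K^x] modulo the subspace wedge_rel:
biadditivity in each argument (multiplicatively) and alternation.\<close>
definition wedge_rel :: "('k::field \<times> 'k \<Rightarrow> rat) set" where
  "wedge_rel =
     {vsub (vsub (bas (u * v, w)) (bas (u, w))) (bas (v, w)) | u v w. u \<noteq> 0 \<and> v \<noteq> 0 \<and> w \<noteq> 0}
   \<union> {vsub (vsub (bas (u, v * w)) (bas (u, v))) (bas (u, w)) | u v w. u \<noteq> 0 \<and> v \<noteq> 0 \<and> w \<noteq> 0}
   \<union> {bas (u, u) | u. u \<noteq> 0}"

text \<open>Membership in the image of wedge^2 of the Q-subspace of K^* tensor Q spanned by the
set G of nonzero elements of K: z lies in span of (g \<and> h), g,h \<in> G, modulo wedge_rel.\<close>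
definition in_wedge2 :: "'k::field set \<Rightarrow> ('k \<times> 'k \<Rightarrow> rat) \<Rightarrow> bool" where
  "in_wedge2 G z \<longleftrightarrow> z \<in> qspan (wedge_rel \<union> {bas (g, h) | g h. g \<in> G \<and> h \<in> G})"

text \<open>P^1(K) = 'k option, None = \<infinity>.  Lift of delta_2 to Q[P^1(K)]:
{x}_2 \<mapsto> x \<and> (1-x) for x \<notin> {0,1,\<infinity>}, and 0 otherwise.\<close>
definition delta_gen :: "'k::field option \<Rightarrow> ('k \<times> 'k \<Rightarrow> rat)" where
  "delta_gen p = (case p of None \<Rightarrow> vzero
     | Some x \<Rightarrow> if x \<noteq> 0 \<and> x \<noteq> 1 then bas (x, 1 - x) else vzero)"

definition delta2 :: "('k::field option \<Rightarrow> rat) \<Rightarrow> ('k \<times> 'k \<Rightarrow> rat)" where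
  "delta2 y = (\<lambda>z. \<Sum>x\<in>{x. y x \<noteq> 0}. y x * delta_gen x z)"

text \<open>Cross ratio on P^1(K) (for pairwise distinct arguments), extended to \<infinity> by continuity.\<close>
definition cross_ratio :: "'k::field option \<Rightarrow> 'k option \<Rightarrow> 'k option \<Rightarrow> 'k option \<Rightarrow> 'k option" where
  "cross_ratio a b c d = (case (a, b, c, d) of
      (Some a, Some b, Some c, Some d) \<Rightarrow> Some ((a - b) * (c - d) / ((c - b) * (a - d)))
    | (None, Some b, Some c, Some d) \<Rightarrow> Some ((c - d) / (c - b))
    | (Some a, None, Some c, Some d) \<Rightarrow> Some ((c - d) / (a - d))
    | (Some a, Some b, None, Some d) \<Rightarrow> Some ((a - b) / (a - d))
    | (Some a, Some b, Some c, None) \<Rightarrow> Some ((a - b) / (c - b))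
    | _ \<Rightarrow> None)"

definition five_term :: "'k::field option \<Rightarrow> 'k option \<Rightarrow> 'k option \<Rightarrow> 'k option \<Rightarrow> 'k option
    \<Rightarrow> ('k option \<Rightarrow> rat)" where
  "five_term x1 x2 x3 x4 x5 =
     (\<lambda>p. - bas (cross_ratio x2 x3 x4 x5) p + bas (cross_ratio x1 x3 x4 x5) p
          - bas (cross_ratio x1 x2 x4 x5) p + bas (cross_ratio x1 x2 x3 x5) p
          - bas (cross_ratio x1 x2 x3 x4) p)"

definition R2_gens :: "('k::field option \<Rightarrow> rat) set" where
  "R2_gens = {bas (Some 0), bas None} \<union>
     {five_term x1 x2 x3 x4 x5 | x1 x2 x3 x4 x5. distinct [x1, x2, x3, x4, x5]}"

text \<open>Preimage in Q[P^1(K)] of {y \<in> B_2(K). delta_2 y \<in> wedge^2 span(G)}.\<close>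
definition B_sub :: "'k::field set \<Rightarrow> ('k option \<Rightarrow> rat) set" where
  "B_sub G = {y. fin_supp y \<and> in_wedge2 G (delta2 y)}"

definition V_gens :: "nat \<Rightarrow> 'a::field ratfun set" where
  "V_gens e = {pfr p | p. p \<noteq> 0 \<and> degree p \<le> e}"

definition Vf_gens :: "'a::field poly \<Rightarrow> 'a ratfun set" where
  "Vf_gens f = V_gens (degree f - 1) \<union> {pfr f}"

text \<open>x_f(a,b) for representatives a,b of degree < deg f.\<close>
definition x_f :: "'a::field poly \<Rightarrow> 'a poly \<Rightarrow> 'a poly \<Rightarrow> 'a ratfun" where
  "x_f f a b = pfr (a * b) / pfr ((a * b) mod f)"

end

theory Submission
  imports Defs "HOL-Library.Function_Algebras" "HOL-Computational_Algebra.Polynomial_Factorial"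
begin

text \<open>The tame symbol at \<open>f\<close>, taken modulo torsion, is a linear map from
\<open>\<Lambda>\<^sup>2 F(t)\<^sup>* \<otimes> \<rat>\<close> to \<open>(F[t]/(f))\<^sup>* \<otimes> \<rat>\<close> that kills every \<open>x \<and> (1 - x)\<close> and every
\<open>g \<and> h\<close> with \<open>g, h \<in> V\<^sub>d\<^sub>-\<^sub>1\<close>. For \<open>y \<in> B\<^sub>f\<close> write \<open>\<delta>\<^sub>2 y = w + f \<and> s\<close> with \<open>w \<in> \<Lambda>\<^sup>2 V\<^sub>d\<^sub>-\<^sub>1\<close> and \<open>s\<close>
a formal combination of reduced polynomials; applying the tame symbol shows that \<open>s\<close> is a
relation in \<open>(F[t]/(f))\<^sup>* \<otimes> \<rat>\<close>, i.e. a combination of the relations \<open>a + b - (a b mod f)\<close>.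
Because \<open>a b = q f + r\<close> with \<open>deg q < d\<close>, we have \<open>1 - x\<^sub>f(a,b) = -q f / r\<close>, so
\<open>f \<and> (a + b - r) + \<delta>\<^sub>2 {x\<^sub>f(a,b)}\<^sub>2\<close> lies in \<open>\<Lambda>\<^sup>2 V\<^sub>d\<^sub>-\<^sub>1\<close>; subtracting the matching
combination of the \<open>{x\<^sub>f(a,b)}\<^sub>2\<close> from \<open>y\<close> lands in \<open>B\<^sub>d\<^sub>-\<^sub>1\<close>. The reverse inclusion needs
\<open>\<delta>\<^sub>2\<close> to vanish on the five-term relation: \<open>\<delta>\<^sub>2\<close> of a cross ratio is an alternating sum,
over its four points \<open>v\<close>, of cyclic sums of \<open>(v - x)\<^sup>2 \<and> (v - y)\<^sup>2\<close>, and in the five-term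
combination these cancel apex by apex.\<close>

section \<open>Finitely supported functions and linear extension\<close>

lemma vadd_eq: "vadd u v = u + v"
  by (simp add: vadd_def plus_fun_def)
lemma vsub_eq: "vsub u v = u - v"
  by (simp add: vsub_def fun_eq_iff)
lemma vzero_eq: "vzero = 0"
  by (simp add: vzero_def zero_fun_def)

lemma qspan_zero: "0 \<in> qspan S"
  using qspan.zero by (simp add: vzero_eq)
lemma qspan_add: "u \<in> qspan S \<Longrightarrow> v \<in> qspan S \<Longrightarrow> u + v \<in> qspan S"
  using qspan.add by (simp add: vadd_eq)
lemma qspan_scale: "u \<in> qspan S \<Longrightarrow> (\<lambda>x. c * u x) \<in> qspan S"
  using qspan.scale by (simp add: vscale_def)
lemma qspan_uminus: "u \<in> qspan S \<Longrightarrow> - u \<in> qspan S"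
  using qspan_scale[of u S "-1"] by (simp add: fun_Compl_def)
lemma qspan_diff: "u \<in> qspan S \<Longrightarrow> v \<in> qspan S \<Longrightarrow> u - v \<in> qspan S"
  using qspan_add[of u S "- v"] qspan_uminus[of v S] by simp
lemma qspan_half: "u + u \<in> qspan S \<Longrightarrow> u \<in> qspan S"
  using qspan_scale[of "u + u" S "1 / 2"] by simp
lemma qspan_sum: "(\<And>i. i \<in> A \<Longrightarrow> g i \<in> qspan S) \<Longrightarrow> sum g A \<in> qspan S"
  by (induction A rule: infinite_finite_induct) (auto intro: qspan_add qspan_zero)

lemma qspan_minimal:
  assumes "S \<subseteq> V" "0 \<in> V" "\<And>u v. u \<in> V \<Longrightarrow> v \<in> V \<Longrightarrow> u + v \<in> V"
    and "\<And>u c. u \<in> V \<Longrightarrow> (\<lambda>x. c * u x) \<in> V"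
  shows "qspan S \<subseteq> V"
proof
  fix x assume "x \<in> qspan S" then show "x \<in> V"
    by induction (use assms in \<open>auto simp: vzero_eq[symmetric] vadd_eq[symmetric] vscale_def\<close>)
qed

lemma qspan_mono: "S \<subseteq> T \<Longrightarrow> qspan S \<subseteq> qspan T"
  by (rule qspan_minimal) (auto intro: qspan.gen qspan_zero qspan_add qspan_scale)

lemma sum_fun_apply: "sum g A x = (\<Sum>i\<in>A. g i x)"
  by (induction A rule: infinite_finite_induct) auto

lemma fin_supp_zero [simp]: "fin_supp 0"
  by (simp add: fin_supp_def)
lemma fin_supp_bas [simp]: "fin_supp (bas b)"
  by (simp add: fin_supp_def bas_def)
lemma fin_supp_add [simp, intro]: "fin_supp u \<Longrightarrow> fin_supp v \<Longrightarrow> fin_supp (u + v)"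
  unfolding fin_supp_def by (rule finite_subset[of _ "{x. u x \<noteq> 0} \<union> {x. v x \<noteq> 0}"]) auto
lemma fin_supp_scale [simp, intro]: "fin_supp u \<Longrightarrow> fin_supp (\<lambda>x. c * u x)"
  unfolding fin_supp_def by (rule finite_subset[of _ "{x. u x \<noteq> 0}"]) auto
lemma fin_supp_uminus [simp, intro]: "fin_supp u \<Longrightarrow> fin_supp (- u)"
  by (simp add: fin_supp_def)
lemma fin_supp_diff [simp, intro]: "fin_supp u \<Longrightarrow> fin_supp v \<Longrightarrow> fin_supp (u - v)"
  using fin_supp_add[of u "- v"] by auto
lemma fin_supp_sum: "(\<And>i. i \<in> A \<Longrightarrow> fin_supp (g i)) \<Longrightarrow> fin_supp (sum g A)"
  by (induction A rule: infinite_finite_induct) auto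

definition lin_ext :: "('b \<Rightarrow> 'c \<Rightarrow> rat) \<Rightarrow> ('b \<Rightarrow> rat) \<Rightarrow> 'c \<Rightarrow> rat" where
  "lin_ext g s = (\<lambda>z. \<Sum>p | s p \<noteq> 0. s p * g p z)"

lemma lin_ext_eq_sum:
  assumes "finite A" "{p. s p \<noteq> 0} \<subseteq> A"
  shows "lin_ext g s = (\<lambda>z. \<Sum>p\<in>A. s p * g p z)"
  unfolding lin_ext_def by (rule ext, rule sum.mono_neutral_left) (use assms in auto)

lemma lin_ext_add:
  assumes "fin_supp s" "fin_supp t"
  shows "lin_ext g (s + t) = lin_ext g s + lin_ext g t"
proof -
  let ?A = "{p. s p \<noteq> 0} \<union> {p. t p \<noteq> 0}"
  have "finite ?A"
    using assms by (simp add: fin_supp_def)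
  then show ?thesis
    by (subst (1 2 3) lin_ext_eq_sum[of ?A]) (auto simp: fun_eq_iff sum.distrib algebra_simps)
qed

lemma lin_ext_scale:
  assumes "fin_supp s"
  shows "lin_ext g (\<lambda>x. c * s x) = (\<lambda>z. c * lin_ext g s z)"
proof -
  have "finite {p. s p \<noteq> 0}"
    using assms by (simp add: fin_supp_def)
  then show ?thesis
    by (subst (1 2) lin_ext_eq_sum[of "{p. s p \<noteq> 0}"])
       (auto simp: sum_distrib_left algebra_simps)
qed

lemma lin_ext_uminus: "fin_supp s \<Longrightarrow> lin_ext g (- s) = - lin_ext g s"
  using lin_ext_scale[of s g "- 1"] by (simp add: fun_Compl_def)

lemma lin_ext_diff: "fin_supp s \<Longrightarrow> fin_supp t \<Longrightarrow> lin_ext g (s - t) = lin_ext g s - lin_ext g t"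
  using lin_ext_add[of s "- t" g] lin_ext_uminus[of t g] by auto

lemma lin_ext_zero [simp]: "lin_ext g 0 = 0"
  by (simp add: lin_ext_def fun_eq_iff)

lemma lin_ext_bas [simp]: "lin_ext g (bas b) = g b"
  by (subst lin_ext_eq_sum[of "{b}"]) (auto simp: bas_def)

lemma delta2_eq_lin_ext: "delta2 = lin_ext delta_gen"
  by (simp add: delta2_def lin_ext_def fun_eq_iff)

lemma delta2_zero [simp]: "delta2 0 = 0"
  by (simp add: delta2_eq_lin_ext)

lemma delta2_bas [simp]: "delta2 (bas x) = delta_gen x"
  by (simp add: delta2_eq_lin_ext)

lemma delta2_add: "fin_supp u \<Longrightarrow> fin_supp v \<Longrightarrow> delta2 (u + v) = delta2 u + delta2 v"
  unfolding delta2_eq_lin_ext by (rule lin_ext_add)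

lemma delta2_scale: "fin_supp u \<Longrightarrow> delta2 (\<lambda>x. c * u x) = (\<lambda>z. c * delta2 u z)"
  unfolding delta2_eq_lin_ext by (rule lin_ext_scale)

lemma lin_ext_sum:
  "(\<And>i. i \<in> A \<Longrightarrow> fin_supp (v i)) \<Longrightarrow> lin_ext g (sum v A) = (\<Sum>i\<in>A. lin_ext g (v i))"
  by (induction A rule: infinite_finite_induct) (auto simp: lin_ext_add fin_supp_sum)

lemma lin_ext_as_sum:
  "lin_ext g s = (\<Sum>p | s p \<noteq> 0. (\<lambda>z. s p * g p z))"
  by (simp add: lin_ext_def fun_eq_iff sum_fun_apply)

lemma fin_supp_lin_ext: "fin_supp s \<Longrightarrow> (\<And>p. fin_supp (g p)) \<Longrightarrow> fin_supp (lin_ext g s)"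
  by (auto simp: lin_ext_as_sum intro!: fin_supp_sum)

lemma lin_ext_in_qspan:
  "fin_supp s \<Longrightarrow> (\<And>p. s p \<noteq> 0 \<Longrightarrow> g p \<in> qspan S) \<Longrightarrow> lin_ext g s \<in> qspan S"
  by (auto simp: lin_ext_as_sum intro!: qspan_sum qspan_scale)

lemma lin_ext_uminus_fun: "lin_ext (\<lambda>p. - g p) s = - lin_ext g s"
  by (simp add: lin_ext_def fun_eq_iff sum_negf)

lemma lin_ext_diff_fun: "lin_ext (\<lambda>p. g p - h p) s = lin_ext g s - lin_ext h s"
  by (simp add: lin_ext_def fun_eq_iff sum_subtractf algebra_simps)

lemma lin_ext_bas_self: "fin_supp s \<Longrightarrow> lin_ext bas s = s"
  by (auto simp: lin_ext_def fun_eq_iff bas_def fin_supp_def if_distrib sum.delta' cong: if_cong)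

lemma lin_ext_comp:
  assumes "fin_supp s" "\<And>p. fin_supp (g p)"
  shows "lin_ext h (lin_ext g s) = lin_ext (\<lambda>p. lin_ext h (g p)) s"
proof -
  have "lin_ext h (lin_ext g s) = (\<Sum>p | s p \<noteq> 0. lin_ext h (\<lambda>z. s p * g p z))"
    unfolding lin_ext_as_sum[of g s] using assms by (intro lin_ext_sum fin_supp_scale)
  also have "\<dots> = (\<Sum>p | s p \<noteq> 0. (\<lambda>z. s p * lin_ext h (g p) z))"
    using assms by (simp add: lin_ext_scale)
  also have "\<dots> = lin_ext (\<lambda>p. lin_ext h (g p)) s"
    by (simp only: lin_ext_as_sum)
  finally show ?thesis .
qed

lemma fin_supp_qspan: "(\<And>u. u \<in> S \<Longrightarrow> fin_supp u) \<Longrightarrow> v \<in> qspan S \<Longrightarrow> fin_supp v"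
  using qspan_minimal[of S "Collect fin_supp"] by auto

lemma lin_ext_qspan:
  assumes "\<And>u. u \<in> S \<Longrightarrow> fin_supp u \<and> lin_ext g u \<in> qspan T" "v \<in> qspan S"
  shows "lin_ext g v \<in> qspan T"
proof -
  have "qspan S \<subseteq> {v. fin_supp v \<and> lin_ext g v \<in> qspan T}"
    using assms(1)
    by (intro qspan_minimal) (auto simp: lin_ext_add lin_ext_scale qspan_zero intro: qspan_add qspan_scale)
  then show ?thesis
    using assms(2) by blast
qed

definition span_cong :: "('b \<Rightarrow> rat) set \<Rightarrow> ('b \<Rightarrow> rat) \<Rightarrow> ('b \<Rightarrow> rat) \<Rightarrow> bool" where
  "span_cong S u v \<longleftrightarrow> u - v \<in> qspan S"

lemma span_cong_refl [simp]: "span_cong S u u"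
  by (simp add: span_cong_def qspan_zero)
lemma span_cong_sym: "span_cong S u v \<Longrightarrow> span_cong S v u"
  unfolding span_cong_def using qspan_uminus by fastforce
lemma span_cong_trans [trans]: "span_cong S u v \<Longrightarrow> span_cong S v w \<Longrightarrow> span_cong S u w"
  unfolding span_cong_def using qspan_add by fastforce
lemma eq_span_cong_trans [trans]: "u = v \<Longrightarrow> span_cong S v w \<Longrightarrow> span_cong S u w"
  by simp
lemma span_cong_eq_trans [trans]: "span_cong S u v \<Longrightarrow> v = w \<Longrightarrow> span_cong S u w"
  by simp
lemma span_cong_add: "span_cong S u u' \<Longrightarrow> span_cong S v v' \<Longrightarrow> span_cong S (u + v) (u' + v')"
  unfolding span_cong_def using qspan_add by (fastforce simp: algebra_simps)
lemma span_cong_diff: "span_cong S u u' \<Longrightarrow> span_cong S v v' \<Longrightarrow> span_cong S (u - v) (u' - v')"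
  unfolding span_cong_def using qspan_diff by (fastforce simp: algebra_simps)
lemma span_cong_uminus: "span_cong S u u' \<Longrightarrow> span_cong S (- u) (- u')"
  using span_cong_diff[of S 0 0 u u'] by simp
lemma span_cong_scale: "span_cong S u v \<Longrightarrow> span_cong S (\<lambda>x. c * u x) (\<lambda>x. c * v x)"
  unfolding span_cong_def using qspan_scale[of "u - v" S c] by (simp add: algebra_simps fun_diff_def)
lemma span_cong_mono: "S \<subseteq> T \<Longrightarrow> span_cong S u v \<Longrightarrow> span_cong T u v"
  using qspan_mono by (auto simp: span_cong_def)
lemma lin_ext_span_cong:
  fixes g h :: "'b \<Rightarrow> 'c \<Rightarrow> rat"
  assumes "fin_supp s" "\<And>p. s p \<noteq> 0 \<Longrightarrow> span_cong S (g p) (h p)"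
  shows "span_cong S (lin_ext g s) (lin_ext h s)"
  using lin_ext_in_qspan[where g = "\<lambda>p. g p - h p"] assms
  by (simp add: span_cong_def lin_ext_diff_fun)

lemma span_cong_add_imp_diff: "span_cong S u (v + w) \<Longrightarrow> span_cong S v (u - w)"
  unfolding span_cong_def using qspan_uminus[of "u - (v + w)" S] by (simp add: algebra_simps)
lemma span_cong_add_0_iff: "span_cong S (u + v) 0 \<longleftrightarrow> span_cong S u (- v)"
  by (simp add: span_cong_def)
lemma span_cong_0_iff: "span_cong S u 0 \<longleftrightarrow> u \<in> qspan S"
  by (simp add: span_cong_def)
lemma span_cong_mem: "span_cong S u v \<Longrightarrow> v \<in> qspan S \<Longrightarrow> u \<in> qspan S"
  unfolding span_cong_def using qspan_add by fastforce

section \<open>Calculus in the exterior square\<close>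

abbreviation wedge_cong :: "('k::field \<times> 'k \<Rightarrow> rat) \<Rightarrow> ('k \<times> 'k \<Rightarrow> rat) \<Rightarrow> bool"
    (infix "\<approx>\<^sub>\<and>" 50) where
  "u \<approx>\<^sub>\<and> v \<equiv> span_cong wedge_rel u v"

lemma wedge_mult_left:
  assumes "u \<noteq> 0" "v \<noteq> 0" "w \<noteq> 0"
  shows "bas (u * v, w) \<approx>\<^sub>\<and> bas (u, w) + bas (v, w)"
proof -
  have "bas (u * v, w) - bas (u, w) - bas (v, w) \<in> wedge_rel"
    unfolding wedge_rel_def vsub_eq using assms by blast
  then show ?thesis
    unfolding span_cong_def diff_diff_eq by (rule qspan.gen)
qed

lemma wedge_mult_right:
  assumes "u \<noteq> 0" "v \<noteq> 0" "w \<noteq> 0"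
  shows "bas (u, v * w) \<approx>\<^sub>\<and> bas (u, v) + bas (u, w)"
proof -
  have "bas (u, v * w) - bas (u, v) - bas (u, w) \<in> wedge_rel"
    unfolding wedge_rel_def vsub_eq using assms by blast
  then show ?thesis
    unfolding span_cong_def diff_diff_eq by (rule qspan.gen)
qed

lemma wedge_self: "u \<noteq> 0 \<Longrightarrow> bas (u, u) \<approx>\<^sub>\<and> 0"
  unfolding span_cong_def wedge_rel_def by (intro qspan.gen) auto

lemma wedge_divide_left:
  assumes "u \<noteq> 0" "v \<noteq> 0" "w \<noteq> 0"
  shows "bas (u / v, w) \<approx>\<^sub>\<and> bas (u, w) - bas (v, w)"
proof -
  have "bas (u, w) = bas (u / v * v, w)"
    using assms by simp
  also have "\<dots> \<approx>\<^sub>\<and> bas (u / v, w) + bas (v, w)"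
    using assms by (intro wedge_mult_left) auto
  finally show ?thesis
    by (rule span_cong_add_imp_diff)
qed

lemma wedge_divide_right:
  assumes "u \<noteq> 0" "v \<noteq> 0" "w \<noteq> 0"
  shows "bas (w, u / v) \<approx>\<^sub>\<and> bas (w, u) - bas (w, v)"
proof -
  have "bas (w, u) = bas (w, u / v * v)"
    using assms by simp
  also have "\<dots> \<approx>\<^sub>\<and> bas (w, u / v) + bas (w, v)"
    using assms by (intro wedge_mult_right) auto
  finally show ?thesis
    by (rule span_cong_add_imp_diff)
qed

lemma wedge_swap:
  assumes "u \<noteq> 0" "v \<noteq> 0"
  shows "bas (u, v) \<approx>\<^sub>\<and> - bas (v, u)"
proof -
  have "0 \<approx>\<^sub>\<and> bas (u * v, u * v)"
    using assms by (auto intro: span_cong_sym[OF wedge_self])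
  also have "\<dots> \<approx>\<^sub>\<and> bas (u, u * v) + bas (v, u * v)"
    using assms by (intro wedge_mult_left) auto
  also have "\<dots> \<approx>\<^sub>\<and> (bas (u, u) + bas (u, v)) + (bas (v, u) + bas (v, v))"
    using assms by (intro span_cong_add wedge_mult_right)
  also have "\<dots> \<approx>\<^sub>\<and> (0 + bas (u, v)) + (bas (v, u) + 0)"
    using assms by (intro span_cong_add wedge_self span_cong_refl)
  finally have "0 \<approx>\<^sub>\<and> bas (u, v) + bas (v, u)"
    by simp
  from span_cong_add_imp_diff[OF this] show ?thesis
    by simp
qed

lemma wedge_square:
  assumes "u \<noteq> 0" "v \<noteq> 0"
  shows "bas (u\<^sup>2, v\<^sup>2) \<approx>\<^sub>\<and> 4 * bas (u, v)"
proof -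
  have "bas (u * u, v * v) \<approx>\<^sub>\<and> bas (u, v * v) + bas (u, v * v)"
    using assms by (intro wedge_mult_left) auto
  also have "\<dots> \<approx>\<^sub>\<and> (bas (u, v) + bas (u, v)) + (bas (u, v) + bas (u, v))"
    using assms by (intro span_cong_add wedge_mult_right)
  finally show ?thesis
    by (simp add: power2_eq_square fun_eq_iff)
qed

lemma wedge_ratio:
  assumes "a \<noteq> 0" "b \<noteq> 0" "c \<noteq> 0"
  shows "bas (a / c, b / c) \<approx>\<^sub>\<and> bas (a, b) + bas (b, c) + bas (c, a)"
proof -
  have "bas (a / c, b / c) \<approx>\<^sub>\<and> bas (a, b / c) - bas (c, b / c)"
    using assms by (intro wedge_divide_left) auto
  also have "\<dots> \<approx>\<^sub>\<and> (bas (a, b) - bas (a, c)) - (bas (c, b) - bas (c, c))"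
    using assms by (intro span_cong_diff wedge_divide_right)
  also have "\<dots> \<approx>\<^sub>\<and> (bas (a, b) - - bas (c, a)) - (- bas (b, c) - 0)"
    using assms by (intro span_cong_diff wedge_swap wedge_self span_cong_refl)
  finally show ?thesis
    by (simp add: algebra_simps)
qed

lemma wedge_mult_mult:
  assumes "a \<noteq> 0" "b \<noteq> 0" "c \<noteq> 0" "d \<noteq> 0"
  shows "bas (a * b, c * d) \<approx>\<^sub>\<and> bas (a, c) + bas (a, d) + bas (b, c) + bas (b, d)"
proof -
  have "bas (a * b, c * d) \<approx>\<^sub>\<and> bas (a, c * d) + bas (b, c * d)"
    using assms by (intro wedge_mult_left) auto
  also have "\<dots> \<approx>\<^sub>\<and> (bas (a, c) + bas (a, d)) + (bas (b, c) + bas (b, d))"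
    using assms by (intro span_cong_add wedge_mult_right)
  finally show ?thesis
    by (simp add: algebra_simps)
qed

lemma wedge_antisym: "u \<noteq> 0 \<Longrightarrow> v \<noteq> 0 \<Longrightarrow> bas (u, v) + bas (v, u) \<approx>\<^sub>\<and> 0"
  using span_cong_add[OF wedge_swap span_cong_refl, of u v "bas (v, u)"] by simp

lemma wedge_ratio_common_factor:
  assumes "a \<noteq> 0" "b \<noteq> 0" "r \<noteq> 0" "c \<noteq> 0" "g \<noteq> 0"
  shows "bas (c, a) + bas (c, b) - bas (c, r) + bas (a * b / r, g * c / r)
    \<approx>\<^sub>\<and> bas (a, g) + bas (b, g) + bas (g, r) + bas (r, a) + bas (r, b)"
proof -
  have "bas (a * b / r, g * c / r) \<approx>\<^sub>\<and> bas (a * b, g * c) + bas (g * c, r) + bas (r, a * b)"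
    using assms by (intro wedge_ratio) auto
  also have "\<dots> \<approx>\<^sub>\<and> (bas (a, g) + bas (a, c) + bas (b, g) + bas (b, c))
      + (bas (g, r) + bas (c, r)) + (bas (r, a) + bas (r, b))"
    using assms by (intro span_cong_add wedge_mult_mult wedge_mult_left wedge_mult_right)
  finally have "bas (c, a) + bas (c, b) - bas (c, r) + bas (a * b / r, g * c / r) \<approx>\<^sub>\<and>
      (bas (c, a) + bas (c, b) - bas (c, r)) + ((bas (a, g) + bas (a, c) + bas (b, g) + bas (b, c))
      + (bas (g, r) + bas (c, r)) + (bas (r, a) + bas (r, b)))"
    by (rule span_cong_add[OF span_cong_refl])
  also have "\<dots> = (bas (a, c) + bas (c, a)) + (bas (b, c) + bas (c, b))
      + (bas (a, g) + bas (b, g) + bas (g, r) + bas (r, a) + bas (r, b))"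
    by (simp add: algebra_simps)
  also have "\<dots> \<approx>\<^sub>\<and> 0 + 0 + (bas (a, g) + bas (b, g) + bas (g, r) + bas (r, a) + bas (r, b))"
    using assms by (intro span_cong_add wedge_antisym span_cong_refl)
  finally show ?thesis
    by simp
qed

section \<open>The five-term relation\<close>

text \<open>Squared differences, with the factors at \<open>\<infinity>\<close> dropped, make the formulas for a cross ratio
and its complement uniform in the position of \<open>\<infinity>\<close> (the unsquared factors are not, because of a
sign); squaring only costs a factor \<open>4\<close> in the exterior square.\<close>

definition sqdiff :: "'k::field option \<Rightarrow> 'k option \<Rightarrow> 'k" where
  "sqdiff p q = (case (p, q) of (Some x, Some y) \<Rightarrow> (x - y)\<^sup>2 | _ \<Rightarrow> 1)"

lemma sqdiff_commute: "sqdiff q p = sqdiff p q"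
  by (simp add: sqdiff_def power2_commute split: option.split)

lemma sqdiff_nonzero: "p \<noteq> q \<Longrightarrow> sqdiff p q \<noteq> 0"
  by (auto simp: sqdiff_def split: option.split)

lemma one_minus_divide_square: "v \<noteq> 0 \<Longrightarrow> v - u = w \<Longrightarrow> (1 - u / v)\<^sup>2 = w\<^sup>2 / v\<^sup>2"
  for u v w :: "'k::field"
  by (simp add: field_simps)

lemma cross_ratio_squares:
  assumes "distinct [p, q, r, s]"
  obtains c where "cross_ratio p q r s = Some c"
    and "c\<^sup>2 = sqdiff p q * sqdiff r s / (sqdiff p s * sqdiff q r)"
    and "(1 - c)\<^sup>2 = sqdiff p r * sqdiff q s / (sqdiff p s * sqdiff q r)"
proof -
  consider (finite) a b c d where "p = Some a" "q = Some b" "r = Some c" "s = Some d"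
    | (p_inf) b c d where "p = None" "q = Some b" "r = Some c" "s = Some d"
    | (q_inf) a c d where "p = Some a" "q = None" "r = Some c" "s = Some d"
    | (r_inf) a b d where "p = Some a" "q = Some b" "r = None" "s = Some d"
    | (s_inf) a b c where "p = Some a" "q = Some b" "r = Some c" "s = None"
    using assms by (cases p; cases q; cases r; cases s) auto
  then show ?thesis
  proof cases
    case finite
    have "(1 - (a - b) * (c - d) / ((c - b) * (a - d)))\<^sup>2
        = ((a - c) * (d - b))\<^sup>2 / ((c - b) * (a - d))\<^sup>2"
      by (rule one_minus_divide_square) (use assms finite in auto, simp add: algebra_simps)
    then show ?thesis
      using that finite
      by (simp add: cross_ratio_def sqdiff_def power_divide power_mult_distrib power2_commute)
  next
    case p_inf
    have "(1 - (c - d) / (c - b))\<^sup>2 = (d - b)\<^sup>2 / (c - b)\<^sup>2"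
      by (rule one_minus_divide_square) (use assms p_inf in auto)
    then show ?thesis
      using that p_inf by (simp add: cross_ratio_def sqdiff_def power_divide power2_commute)
  next
    case q_inf
    have "(1 - (c - d) / (a - d))\<^sup>2 = (a - c)\<^sup>2 / (a - d)\<^sup>2"
      by (rule one_minus_divide_square) (use assms q_inf in auto)
    then show ?thesis
      using that q_inf by (simp add: cross_ratio_def sqdiff_def power_divide power2_commute)
  next
    case r_inf
    have "(1 - (a - b) / (a - d))\<^sup>2 = (b - d)\<^sup>2 / (a - d)\<^sup>2"
      by (rule one_minus_divide_square) (use assms r_inf in auto)
    then show ?thesis
      using that r_inf by (simp add: cross_ratio_def sqdiff_def power_divide power2_commute)
  next
    case s_inf
    have "(1 - (a - b) / (c - b))\<^sup>2 = (c - a)\<^sup>2 / (c - b)\<^sup>2"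
      by (rule one_minus_divide_square) (use assms s_inf in auto)
    then show ?thesis
      using that s_inf by (simp add: cross_ratio_def sqdiff_def power_divide power2_commute)
  qed
qed

definition apex_cycle :: "'k::field option \<Rightarrow> 'k option \<Rightarrow> 'k option \<Rightarrow> 'k option \<Rightarrow> ('k \<times> 'k \<Rightarrow> rat)"
  where "apex_cycle v x y z =
    bas (sqdiff v x, sqdiff v y) + bas (sqdiff v y, sqdiff v z) + bas (sqdiff v z, sqdiff v x)"

lemma apex_cycle_rotate: "apex_cycle v x y z = apex_cycle v y z x"
  by (simp add: apex_cycle_def algebra_simps)

lemma apex_cycle_swap:
  assumes "v \<noteq> x" "v \<noteq> y" "v \<noteq> z"
  shows "apex_cycle v x z y \<approx>\<^sub>\<and> - apex_cycle v x y z"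
proof -
  have "apex_cycle v x z y + apex_cycle v x y z =
      (bas (sqdiff v x, sqdiff v z) + bas (sqdiff v z, sqdiff v x))
    + (bas (sqdiff v z, sqdiff v y) + bas (sqdiff v y, sqdiff v z))
    + (bas (sqdiff v y, sqdiff v x) + bas (sqdiff v x, sqdiff v y))"
    by (simp add: apex_cycle_def algebra_simps)
  also have "\<dots> \<approx>\<^sub>\<and> 0 + 0 + 0"
    using assms by (intro span_cong_add wedge_antisym sqdiff_nonzero)
  finally show ?thesis
    by (simp add: span_cong_add_0_iff)
qed

lemma apex_cycle_alternating:
  assumes "v \<notin> {a, b, c, d}"
  shows "apex_cycle v b c d - apex_cycle v a c d + apex_cycle v a b d - apex_cycle v a b c
    \<approx>\<^sub>\<and> 0"
proof -
  have "apex_cycle v b c d - apex_cycle v a c d + apex_cycle v a b d - apex_cycle v a b c =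
      (bas (sqdiff v d, sqdiff v b) + bas (sqdiff v b, sqdiff v d))
    - (bas (sqdiff v a, sqdiff v c) + bas (sqdiff v c, sqdiff v a))"
    by (simp add: apex_cycle_def algebra_simps)
  also have "\<dots> \<approx>\<^sub>\<and> 0 - 0"
    using assms by (intro span_cong_diff wedge_antisym sqdiff_nonzero) auto
  finally show ?thesis
    by simp
qed

lemma wedge_matchings:
  assumes "distinct [p, q, r, s]"
  shows "bas (sqdiff p q * sqdiff r s / (sqdiff p s * sqdiff q r),
              sqdiff p r * sqdiff q s / (sqdiff p s * sqdiff q r)) \<approx>\<^sub>\<and>
    apex_cycle p q r s - apex_cycle q p r s + apex_cycle r p q s - apex_cycle s p q r"
proof -
  have nz: "sqdiff x y \<noteq> 0" if "x \<in> {p, q, r, s}" "y \<in> {p, q, r, s}" "x \<noteq> y" for x y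
    using that by (intro sqdiff_nonzero)
  have "bas (sqdiff p q * sqdiff r s / (sqdiff p s * sqdiff q r),
             sqdiff p r * sqdiff q s / (sqdiff p s * sqdiff q r))
      \<approx>\<^sub>\<and> bas (sqdiff p q * sqdiff r s, sqdiff p r * sqdiff q s)
      + bas (sqdiff p r * sqdiff q s, sqdiff p s * sqdiff q r)
      + bas (sqdiff p s * sqdiff q r, sqdiff p q * sqdiff r s)"
    using assms nz by (intro wedge_ratio) auto
  also have "\<dots> \<approx>\<^sub>\<and>
        (bas (sqdiff p q, sqdiff p r) + bas (sqdiff p q, sqdiff q s)
       + bas (sqdiff r s, sqdiff p r) + bas (sqdiff r s, sqdiff q s))
      + (bas (sqdiff p r, sqdiff p s) + bas (sqdiff p r, sqdiff q r)
       + bas (sqdiff q s, sqdiff p s) + bas (sqdiff q s, sqdiff q r))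
      + (bas (sqdiff p s, sqdiff p q) + bas (sqdiff p s, sqdiff r s)
       + bas (sqdiff q r, sqdiff p q) + bas (sqdiff q r, sqdiff r s))"
    using assms nz by (intro span_cong_add wedge_mult_mult) auto
  also have "\<dots> = apex_cycle p q r s + apex_cycle q p s r + apex_cycle r s p q + apex_cycle s r q p"
    by (simp add: apex_cycle_def sqdiff_commute algebra_simps)
  also have "\<dots> = apex_cycle p q r s + apex_cycle q p s r + apex_cycle r p q s + apex_cycle s p r q"
    by (metis apex_cycle_rotate)
  also have "\<dots> \<approx>\<^sub>\<and> apex_cycle p q r s + - apex_cycle q p r s + apex_cycle r p q s + - apex_cycle s p q r"
    using assms by (intro span_cong_add span_cong_refl apex_cycle_swap) auto
  finally show ?thesis
    by simp
qed

lemma delta_cross_ratio: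
  assumes "distinct [p, q, r, s]"
  shows "4 * delta_gen (cross_ratio p q r s) \<approx>\<^sub>\<and>
    apex_cycle p q r s - apex_cycle q p r s + apex_cycle r p q s - apex_cycle s p q r"
proof -
  obtain c where c: "cross_ratio p q r s = Some c"
    and c2: "c\<^sup>2 = sqdiff p q * sqdiff r s / (sqdiff p s * sqdiff q r)"
    and c1: "(1 - c)\<^sup>2 = sqdiff p r * sqdiff q s / (sqdiff p s * sqdiff q r)"
    using cross_ratio_squares[OF assms] .
  have nz: "sqdiff x y \<noteq> 0" if "x \<in> {p, q, r, s}" "y \<in> {p, q, r, s}" "x \<noteq> y" for x y
    using that by (intro sqdiff_nonzero)
  have "c \<noteq> 0" "1 - c \<noteq> 0"
    using c2 c1 assms nz by (auto simp flip: power_not_zero)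
  then have "4 * delta_gen (cross_ratio p q r s) = 4 * bas (c, 1 - c)"
    by (simp add: c delta_gen_def)
  also have "\<dots> \<approx>\<^sub>\<and> bas (c\<^sup>2, (1 - c)\<^sup>2)"
    using \<open>c \<noteq> 0\<close> \<open>1 - c \<noteq> 0\<close> by (rule span_cong_sym[OF wedge_square])
  also have "\<dots> \<approx>\<^sub>\<and> apex_cycle p q r s - apex_cycle q p r s + apex_cycle r p q s - apex_cycle s p q r"
    unfolding c1 c2 using assms by (rule wedge_matchings)
  finally show ?thesis .
qed

lemma five_term_eq: "five_term x1 x2 x3 x4 x5 =
    - bas (cross_ratio x2 x3 x4 x5) + bas (cross_ratio x1 x3 x4 x5)
    - bas (cross_ratio x1 x2 x4 x5) + bas (cross_ratio x1 x2 x3 x5) - bas (cross_ratio x1 x2 x3 x4)"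
  by (simp add: five_term_def fun_eq_iff)

lemma delta2_five_term:
  assumes "distinct [x1, x2, x3, x4, x5]"
  shows "delta2 (five_term x1 x2 x3 x4 x5) \<in> qspan wedge_rel"
proof -
  have "4 * delta2 (five_term x1 x2 x3 x4 x5) =
      - (4 * delta_gen (cross_ratio x2 x3 x4 x5)) + 4 * delta_gen (cross_ratio x1 x3 x4 x5)
    - 4 * delta_gen (cross_ratio x1 x2 x4 x5) + 4 * delta_gen (cross_ratio x1 x2 x3 x5)
    - 4 * delta_gen (cross_ratio x1 x2 x3 x4)"
    unfolding five_term_eq delta2_eq_lin_ext
    by (simp add: lin_ext_add lin_ext_diff lin_ext_uminus fin_supp_add fin_supp_diff
        fin_supp_uminus ring_distribs del: fun_diff_def)
  also have "\<dots> \<approx>\<^sub>\<and>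
      - (apex_cycle x2 x3 x4 x5 - apex_cycle x3 x2 x4 x5 + apex_cycle x4 x2 x3 x5 - apex_cycle x5 x2 x3 x4)
    + (apex_cycle x1 x3 x4 x5 - apex_cycle x3 x1 x4 x5 + apex_cycle x4 x1 x3 x5 - apex_cycle x5 x1 x3 x4)
    - (apex_cycle x1 x2 x4 x5 - apex_cycle x2 x1 x4 x5 + apex_cycle x4 x1 x2 x5 - apex_cycle x5 x1 x2 x4)
    + (apex_cycle x1 x2 x3 x5 - apex_cycle x2 x1 x3 x5 + apex_cycle x3 x1 x2 x5 - apex_cycle x5 x1 x2 x3)
    - (apex_cycle x1 x2 x3 x4 - apex_cycle x2 x1 x3 x4 + apex_cycle x3 x1 x2 x4 - apex_cycle x4 x1 x2 x3)"
    using assms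
    by (intro span_cong_add span_cong_diff span_cong_uminus delta_cross_ratio) auto
  also have "\<dots> =
      (apex_cycle x1 x3 x4 x5 - apex_cycle x1 x2 x4 x5 + apex_cycle x1 x2 x3 x5 - apex_cycle x1 x2 x3 x4)
    - (apex_cycle x2 x3 x4 x5 - apex_cycle x2 x1 x4 x5 + apex_cycle x2 x1 x3 x5 - apex_cycle x2 x1 x3 x4)
    + (apex_cycle x3 x2 x4 x5 - apex_cycle x3 x1 x4 x5 + apex_cycle x3 x1 x2 x5 - apex_cycle x3 x1 x2 x4)
    - (apex_cycle x4 x2 x3 x5 - apex_cycle x4 x1 x3 x5 + apex_cycle x4 x1 x2 x5 - apex_cycle x4 x1 x2 x3)
    + (apex_cycle x5 x2 x3 x4 - apex_cycle x5 x1 x3 x4 + apex_cycle x5 x1 x2 x4 - apex_cycle x5 x1 x2 x3)"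
    by (simp add: algebra_simps)
  also have "\<dots> \<approx>\<^sub>\<and> 0 - 0 + 0 - 0 + 0"
    using assms by (intro span_cong_add span_cong_diff apex_cycle_alternating) auto
  finally have "4 * delta2 (five_term x1 x2 x3 x4 x5) \<in> qspan wedge_rel"
    by (simp add: span_cong_0_iff)
  from qspan_scale[OF this, of "1 / 4"] show ?thesis
    by simp
qed

section \<open>Subspaces of the Bloch group cut out by \<open>\<delta>\<^sub>2\<close>\<close>

definition wedge_gens :: "'k::field set \<Rightarrow> ('k \<times> 'k \<Rightarrow> rat) set" where
  "wedge_gens G = wedge_rel \<union> {bas (g, h) | g h. g \<in> G \<and> h \<in> G}"

lemma in_wedge2_iff: "in_wedge2 G z \<longleftrightarrow> z \<in> qspan (wedge_gens G)"
  by (simp add: in_wedge2_def wedge_gens_def)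

lemma wedge_gens_mono: "G \<subseteq> H \<Longrightarrow> qspan (wedge_gens G) \<subseteq> qspan (wedge_gens H)"
  unfolding wedge_gens_def by (rule qspan_mono) blast

lemma wedge_rel_subset_wedge_gens: "qspan wedge_rel \<subseteq> qspan (wedge_gens G)"
  unfolding wedge_gens_def by (rule qspan_mono) blast

lemma span_cong_wedge_gens: "u \<approx>\<^sub>\<and> v \<Longrightarrow> span_cong (wedge_gens G) u v"
  by (rule span_cong_mono[rotated]) (auto simp: wedge_gens_def)

lemma bas_in_wedge_gens: "g \<in> G \<Longrightarrow> h \<in> G \<Longrightarrow> bas (g, h) \<in> qspan (wedge_gens G)"
  unfolding wedge_gens_def by (intro qspan.gen) blast

lemma fin_supp_wedge_rel: "z \<in> wedge_rel \<Longrightarrow> fin_supp z"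
  unfolding wedge_rel_def vsub_eq by auto

lemma fin_supp_delta_gen: "fin_supp (delta_gen x)"
  by (cases x) (auto simp: delta_gen_def vzero_eq)

lemma qspan_B_sub_subset: "qspan (B_sub G) \<subseteq> B_sub G"
  by (rule qspan_minimal)
     (auto simp: B_sub_def in_wedge2_iff delta2_add delta2_scale
       intro: qspan_add qspan_scale qspan_zero)

lemma fin_supp_wedge_gens: "z \<in> qspan (wedge_gens G) \<Longrightarrow> fin_supp z"
  by (rule fin_supp_qspan) (auto simp: wedge_gens_def fin_supp_wedge_rel)

lemma B_sub_mono: "G \<subseteq> H \<Longrightarrow> B_sub G \<subseteq> B_sub H"
  unfolding B_sub_def in_wedge2_iff using wedge_gens_mono by blast

lemma R2_gens_subset_B_sub: "R2_gens \<subseteq> B_sub (G :: 'k::field set)"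
proof
  fix u :: "'k option \<Rightarrow> rat" assume "u \<in> R2_gens"
  then consider "u = bas (Some 0)" | "u = bas None"
    | x1 x2 x3 x4 x5 where "u = five_term x1 x2 x3 x4 x5" "distinct [x1, x2, x3, x4, x5]"
    unfolding R2_gens_def by blast
  then show "u \<in> B_sub G"
  proof cases
    case 3
    then have "delta2 u \<in> qspan (wedge_gens G)"
      using delta2_five_term wedge_rel_subset_wedge_gens by blast
    moreover have "fin_supp u"
      using 3 by (simp add: five_term_eq)
    ultimately show ?thesis
      by (simp add: B_sub_def in_wedge2_iff)
  qed (simp_all add: B_sub_def in_wedge2_iff delta_gen_def vzero_eq qspan_zero)
qed

section \<open>Valuation, residue and tame symbol at an irreducible polynomial\<close>

lemma pfr_nonzero: "p \<noteq> 0 \<Longrightarrow> pfr p \<noteq> 0"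
  by (simp add: pfr_def Zero_fract_def eq_fract)

lemma pfr_0 [simp]: "pfr 0 = 0"
  by (simp add: pfr_def Zero_fract_def)

lemma pfr_mult: "pfr (p * q) = pfr p * pfr q"
  by (simp add: pfr_def)

lemma pfr_add: "pfr (p + q) = pfr p + pfr q"
  by (simp add: pfr_def)

lemma pfr_uminus: "pfr (- p) = - pfr p"
  by (simp add: pfr_def)

locale irreducible_poly =
  fixes f :: "'a::field poly"
  assumes irreducible_f: "irreducible f"
begin

lemma prime_elem_f: "prime_elem f"
  using irreducible_f by (rule field_poly_irreducible_imp_prime)

lemma f_nonzero: "f \<noteq> 0"
  using irreducible_f by auto

lemma f_not_unit: "\<not> is_unit f"
  using irreducible_f by (rule irreducible_not_unit)

lemma not_dvd_small: "p \<noteq> 0 \<Longrightarrow> degree p < degree f \<Longrightarrow> \<not> f dvd p"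
  using dvd_imp_degree_le[of f p] by auto

lemma not_dvd_mult_small:
  "a \<noteq> 0 \<Longrightarrow> b \<noteq> 0 \<Longrightarrow> degree a < degree f \<Longrightarrow> degree b < degree f \<Longrightarrow> \<not> f dvd a * b"
  using not_dvd_small prime_elem_dvd_mult_iff[OF prime_elem_f] by blast

lemma degree_f_pos: "degree f > 0"
  using f_nonzero f_not_unit is_unit_iff_degree by blast

lemma power_dvd_imp_le_degree:
  assumes "p \<noteq> 0" "f ^ k dvd p"
  shows "k \<le> degree p"
proof -
  have "k * degree f \<le> degree p"
    using dvd_imp_degree_le[OF assms(2,1)] by (simp add: degree_power_eq f_nonzero)
  moreover have "k \<le> k * degree f"
    using degree_f_pos by simp
  ultimately show ?thesis
    by linarith
qed

definition forder :: "'a poly \<Rightarrow> nat" where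
  "forder p = (GREATEST k. f ^ k dvd p)"

definition cofactor :: "'a poly \<Rightarrow> 'a poly" where
  "cofactor p = p div f ^ forder p"

lemma power_forder_dvd: "p \<noteq> 0 \<Longrightarrow> f ^ forder p dvd p"
  unfolding forder_def by (rule GreatestI_nat[of _ 0 "degree p"]) (auto intro: power_dvd_imp_le_degree)

lemma le_forder: "p \<noteq> 0 \<Longrightarrow> f ^ k dvd p \<Longrightarrow> k \<le> forder p"
  unfolding forder_def by (rule Greatest_le_nat[of _ _ "degree p"]) (auto intro: power_dvd_imp_le_degree)

lemma cofactor_decompose: "p \<noteq> 0 \<Longrightarrow> p = f ^ forder p * cofactor p"
  unfolding cofactor_def using power_forder_dvd by simp

lemma not_dvd_cofactor:
  assumes "p \<noteq> 0"
  shows "\<not> f dvd cofactor p"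
proof
  assume "f dvd cofactor p"
  then obtain r where "cofactor p = f * r" ..
  then have "p = f ^ Suc (forder p) * r"
    using cofactor_decompose[OF assms] by (simp add: ac_simps)
  then have "f ^ Suc (forder p) dvd p" ..
  with le_forder[OF assms] show False
    by fastforce
qed

lemma forder_cofactor_eqI:
  assumes p: "p = f ^ k * q" and q: "\<not> f dvd q"
  shows "forder p = k" and "cofactor p = q"
proof -
  have "p \<noteq> 0"
    using p q f_nonzero by auto
  have "k \<le> forder p"
    using le_forder[OF \<open>p \<noteq> 0\<close>] p by simp
  moreover have "\<not> k < forder p"
  proof
    assume "k < forder p"
    then have "f ^ Suc k dvd p"
      using dvd_trans[OF le_imp_power_dvd power_forder_dvd[OF \<open>p \<noteq> 0\<close>], of "Suc k"] by simp
    then have "f ^ k * f dvd f ^ k * q"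
      using p by (simp add: ac_simps)
    with q f_nonzero show False
      by simp
  qed
  ultimately show "forder p = k"
    by simp
  then show "cofactor p = q"
    using p f_nonzero by (simp add: cofactor_def)
qed

lemma forder_mult:
  assumes "p \<noteq> 0" "q \<noteq> 0"
  shows "forder (p * q) = forder p + forder q"
    and "cofactor (p * q) = cofactor p * cofactor q"
proof -
  have "p * q = (f ^ forder p * cofactor p) * (f ^ forder q * cofactor q)"
    using cofactor_decompose assms by simp
  also have "\<dots> = f ^ (forder p + forder q) * (cofactor p * cofactor q)"
    by (simp add: power_add ac_simps)
  finally have "p * q = f ^ (forder p + forder q) * (cofactor p * cofactor q)" .
  moreover have "\<not> f dvd cofactor p * cofactor q"
    using assms not_dvd_cofactor prime_elem_dvd_mult_iff[OF prime_elem_f] by blast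
  ultimately show "forder (p * q) = forder p + forder q" "cofactor (p * q) = cofactor p * cofactor q"
    by (rule forder_cofactor_eqI)+
qed

lemma forder_not_dvd:
  assumes "\<not> f dvd p"
  shows "forder p = 0" "cofactor p = p"
  using forder_cofactor_eqI[of p 0 p] assms by simp_all

lemma forder_f: "forder f = 1" "cofactor f = 1"
  using forder_cofactor_eqI[of f 1 1] f_not_unit by simp_all

text \<open>\<open>(F[t]/(f))\<^sup>* \<otimes> \<rat>\<close> is the free \<open>\<rat>\<close>-space on the reduced nonzero polynomials modulo
\<open>residue_rel\<close>; \<open>rclass p\<close> is the class of \<open>p\<close>.\<close>

definition residue_rel :: "('a poly \<Rightarrow> rat) set" where
  "residue_rel = {bas a + bas b - bas (a * b mod f) | a b.
     a \<noteq> 0 \<and> b \<noteq> 0 \<and> degree a < degree f \<and> degree b < degree f}"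

abbreviation residue_cong :: "('a poly \<Rightarrow> rat) \<Rightarrow> ('a poly \<Rightarrow> rat) \<Rightarrow> bool" (infix "\<approx>\<^sub>f" 50)
  where "u \<approx>\<^sub>f v \<equiv> span_cong residue_rel u v"

definition rclass :: "'a poly \<Rightarrow> 'a poly \<Rightarrow> rat" where
  "rclass p = bas (p mod f)"

lemma mod_f_nonzero: "\<not> f dvd p \<Longrightarrow> p mod f \<noteq> 0"
  by (simp add: mod_eq_0_iff_dvd)

lemma degree_mod_f: "\<not> f dvd p \<Longrightarrow> degree (p mod f) < degree f"
  using degree_mod_less'[OF f_nonzero mod_f_nonzero] by blast

lemma degree_mult_div_less:
  assumes "degree a < degree f" "degree b < degree f"
  shows "degree (a * b div f) < degree f"
proof (cases "a * b div f = 0")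
  case False
  have "degree (a * b div f) + degree f = degree (a * b div f * f)"
    using False f_nonzero by (simp add: degree_mult_eq)
  also have "a * b div f * f = a * b - a * b mod f"
    by (simp add: minus_mod_eq_div_mult)
  also have "degree \<dots> \<le> max (degree (a * b)) (degree (a * b mod f))"
    by (rule degree_diff_le_max)
  also have "\<dots> < 2 * degree f - 1"
  proof -
    have "degree (a * b mod f) < degree f"
      using degree_mod_less[OF f_nonzero, of "a * b"] degree_f_pos by auto
    then show ?thesis
      using assms degree_mult_le[of a b] by linarith
  qed
  finally show ?thesis
    by linarith
qed (use degree_f_pos in simp)

lemma rclass_mult:
  assumes "\<not> f dvd a" "\<not> f dvd b"
  shows "rclass (a * b) \<approx>\<^sub>f rclass a + rclass b"
proof -
  have "bas (a mod f) + bas (b mod f) - bas (a mod f * (b mod f) mod f) \<in> residue_rel"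
    unfolding residue_rel_def using assms mod_f_nonzero degree_mod_f by blast
  then show ?thesis
    unfolding span_cong_def rclass_def mod_mult_eq using qspan_uminus[OF qspan.gen] by fastforce
qed

lemma rclass_one: "rclass 1 \<approx>\<^sub>f 0"
proof -
  have "\<not> f dvd 1"
    using f_not_unit by simp
  from rclass_mult[OF this this] have "rclass 1 \<approx>\<^sub>f rclass 1 + rclass 1"
    by simp
  from span_cong_add_imp_diff[OF this] show ?thesis
    by simp
qed

lemma rclass_minus_one: "rclass (- 1) \<approx>\<^sub>f 0"
proof -
  have "\<not> f dvd - 1"
    using f_not_unit by simp
  then have "rclass (- 1) + rclass (- 1) \<approx>\<^sub>f rclass 1"
    using span_cong_sym[OF rclass_mult] by fastforce
  also have "\<dots> \<approx>\<^sub>f 0"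
    by (rule rclass_one)
  finally show ?thesis
    unfolding span_cong_0_iff by (rule qspan_half)
qed

text \<open>\<open>fval\<close> and \<open>fres\<close> read off the \<open>f\<close>-adic valuation and the leading residue from a
representative chosen by \<open>SOME\<close>; \<open>fval_fres_Fract\<close> shows that any representative gives the
same value (for \<open>fres\<close> modulo \<open>residue_rel\<close>).\<close>

definition fract_rep :: "'a poly fract \<Rightarrow> 'a poly \<times> 'a poly" where
  "fract_rep u = (SOME (p, q). q \<noteq> 0 \<and> u = Fract p q)"

definition fval :: "'a poly fract \<Rightarrow> int" where
  "fval u = (case fract_rep u of (p, q) \<Rightarrow> int (forder p) - int (forder q))"

definition fres :: "'a poly fract \<Rightarrow> 'a poly \<Rightarrow> rat" where
  "fres u = (case fract_rep u of (p, q) \<Rightarrow> rclass (cofactor p) - rclass (cofactor q))"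

lemma fract_rep:
  assumes "q \<noteq> 0"
  obtains p' q' where "fract_rep (Fract p q) = (p', q')" "q' \<noteq> 0" "p * q' = p' * q"
proof -
  obtain p' q' where pq': "fract_rep (Fract p q) = (p', q')"
    by fastforce
  have "q' \<noteq> 0 \<and> Fract p q = Fract p' q'"
    using someI[of "\<lambda>(p', q'). q' \<noteq> 0 \<and> Fract p q = Fract p' q'" "(p, q)"] assms pq'
    by (simp add: fract_rep_def)
  with assms that[OF pq'] show ?thesis
    by (auto simp: eq_fract)
qed

lemma fval_fres_Fract:
  assumes "p \<noteq> 0" "q \<noteq> 0"
  shows "fval (Fract p q) = int (forder p) - int (forder q)"
    and "fres (Fract p q) \<approx>\<^sub>f rclass (cofactor p) - rclass (cofactor q)"
proof -
  obtain p' q' where rep: "fract_rep (Fract p q) = (p', q')" "q' \<noteq> 0" "p * q' = p' * q"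
    using fract_rep[OF assms(2)] .
  have "p' \<noteq> 0"
    using rep assms by auto
  have "forder p + forder q' = forder p' + forder q"
    and cof: "cofactor p * cofactor q' = cofactor p' * cofactor q"
    using forder_mult[OF assms(1) rep(2)] forder_mult[OF \<open>p' \<noteq> 0\<close> assms(2)] rep(3) by simp_all
  then show "fval (Fract p q) = int (forder p) - int (forder q)"
    by (simp add: fval_def rep)
  have "rclass (cofactor p') + rclass (cofactor q) \<approx>\<^sub>f rclass (cofactor p' * cofactor q)"
    using \<open>p' \<noteq> 0\<close> assms by (intro span_cong_sym[OF rclass_mult] not_dvd_cofactor)
  also have "\<dots> = rclass (cofactor p * cofactor q')"
    by (simp only: cof)
  also have "\<dots> \<approx>\<^sub>f rclass (cofactor p) + rclass (cofactor q')"
    using assms rep(2) by (intro rclass_mult not_dvd_cofactor)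
  finally have "rclass (cofactor p') - rclass (cofactor q') \<approx>\<^sub>f rclass (cofactor p) - rclass (cofactor q)"
    by (simp add: span_cong_def algebra_simps)
  then show "fres (Fract p q) \<approx>\<^sub>f rclass (cofactor p) - rclass (cofactor q)"
    by (simp add: fres_def rep)
qed

lemma fval_mult:
  assumes "u \<noteq> 0" "v \<noteq> 0"
  shows "fval (u * v) = fval u + fval v"
proof -
  obtain p q where u: "u = Fract p q" "p \<noteq> 0" "q \<noteq> 0"
    using assms(1) by (cases u rule: Fract_cases_nonzero) auto
  obtain p' q' where v: "v = Fract p' q'" "p' \<noteq> 0" "q' \<noteq> 0"
    using assms(2) by (cases v rule: Fract_cases_nonzero) auto
  show ?thesis
    using u v by (simp add: fval_fres_Fract forder_mult)
qed

lemma fres_mult: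
  assumes "u \<noteq> 0" "v \<noteq> 0"
  shows "fres (u * v) \<approx>\<^sub>f fres u + fres v"
proof -
  obtain p q where u: "u = Fract p q" "p \<noteq> 0" "q \<noteq> 0"
    using assms(1) by (cases u rule: Fract_cases_nonzero) auto
  obtain p' q' where v: "v = Fract p' q'" "p' \<noteq> 0" "q' \<noteq> 0"
    using assms(2) by (cases v rule: Fract_cases_nonzero) auto
  have "fres (u * v) \<approx>\<^sub>f rclass (cofactor (p * p')) - rclass (cofactor (q * q'))"
    using u v by (simp add: fval_fres_Fract)
  also have "\<dots> = rclass (cofactor p * cofactor p') - rclass (cofactor q * cofactor q')"
    using u v by (simp add: forder_mult)
  also have "\<dots> \<approx>\<^sub>f (rclass (cofactor p) + rclass (cofactor p'))
                   - (rclass (cofactor q) + rclass (cofactor q'))"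
    using u v by (intro span_cong_diff rclass_mult not_dvd_cofactor)
  also have "\<dots> = (rclass (cofactor p) - rclass (cofactor q))
                   + (rclass (cofactor p') - rclass (cofactor q'))"
    by (simp add: algebra_simps)
  also have "\<dots> \<approx>\<^sub>f fres u + fres v"
    using span_cong_add[OF span_cong_sym[OF fval_fres_Fract(2)] span_cong_sym[OF fval_fres_Fract(2)]] u v
    by simp
  finally show ?thesis .
qed

lemma fval_fres_inverse:
  assumes "u \<noteq> 0"
  shows "fval (inverse u) = - fval u" and "fres (inverse u) \<approx>\<^sub>f - fres u"
proof -
  obtain p q where u: "u = Fract p q" "p \<noteq> 0" "q \<noteq> 0"
    using assms by (cases u rule: Fract_cases_nonzero) auto
  show "fval (inverse u) = - fval u"
    using u by (simp add: fval_fres_Fract)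
  have "fres (inverse u) \<approx>\<^sub>f rclass (cofactor q) - rclass (cofactor p)"
    using u by (simp add: fval_fres_Fract)
  also have "\<dots> = - (rclass (cofactor p) - rclass (cofactor q))"
    by simp
  also have "\<dots> \<approx>\<^sub>f - fres u"
    using span_cong_uminus[OF span_cong_sym[OF fval_fres_Fract(2)]] u by simp
  finally show "fres (inverse u) \<approx>\<^sub>f - fres u" .
qed

lemma fval_fres_pfr:
  assumes "\<not> f dvd p"
  shows "fval (pfr p) = 0" and "fres (pfr p) \<approx>\<^sub>f rclass p"
proof -
  have "p \<noteq> 0" "\<not> f dvd 1"
    using assms f_not_unit by auto
  then show "fval (pfr p) = 0"
    using assms by (simp add: pfr_def fval_fres_Fract forder_not_dvd)
  have "fres (pfr p) \<approx>\<^sub>f rclass p - rclass 1"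
    using \<open>p \<noteq> 0\<close> \<open>\<not> f dvd 1\<close> assms fval_fres_Fract(2)[of p 1]
    by (simp add: pfr_def forder_not_dvd)
  also have "\<dots> \<approx>\<^sub>f rclass p - 0"
    by (intro span_cong_diff span_cong_refl rclass_one)
  finally show "fres (pfr p) \<approx>\<^sub>f rclass p"
    by simp
qed

lemma fval_fres_pfr_f: "fval (pfr f) = 1" "fres (pfr f) \<approx>\<^sub>f 0"
proof -
  have "\<not> f dvd 1"
    using f_not_unit by simp
  then show "fval (pfr f) = 1" "fres (pfr f) \<approx>\<^sub>f 0"
    using fval_fres_Fract[OF f_nonzero one_neq_zero] forder_f
    by (simp_all add: pfr_def forder_not_dvd)
qed

lemma fval_fres_minus_one: "fval (- 1) = 0" "fres (- 1) \<approx>\<^sub>f 0"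
proof -
  have unit: "\<not> f dvd - 1"
    using f_not_unit by simp
  have minus_one: "- 1 = pfr (- 1)"
    by (simp add: pfr_def One_fract_def)
  show "fval (- 1) = 0"
    unfolding minus_one using fval_fres_pfr(1)[OF unit] .
  show "fres (- 1) \<approx>\<^sub>f 0"
    unfolding minus_one using span_cong_trans[OF fval_fres_pfr(2)[OF unit] rclass_minus_one] .
qed

lemma fval_fres_one: "fval 1 = 0" "fres 1 \<approx>\<^sub>f 0"
proof -
  have unit: "\<not> f dvd 1"
    using f_not_unit by simp
  have one: "1 = pfr 1"
    by (simp add: pfr_def One_fract_def)
  show "fval 1 = 0"
    unfolding one using fval_fres_pfr(1)[OF unit] .
  show "fres 1 \<approx>\<^sub>f 0"
    unfolding one using span_cong_trans[OF fval_fres_pfr(2)[OF unit] rclass_one] .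
qed

lemma fval_fres_one_minus_pos:
  assumes "u \<noteq> 0" "fval u > 0"
  shows "fval (1 - u) = 0" and "fres (1 - u) \<approx>\<^sub>f 0"
proof -
  obtain p q where u: "u = Fract p q" "p \<noteq> 0" "q \<noteq> 0"
    using assms(1) by (cases u rule: Fract_cases_nonzero) auto
  define k where "k = forder p - forder q"
  have k: "forder p = forder q + k" "k > 0"
    using assms(2) u by (simp_all add: fval_fres_Fract k_def)
  define X where "X = cofactor q - f ^ k * cofactor p"
  have "q - p = f ^ forder q * X"
    using cofactor_decompose[OF u(2)] cofactor_decompose[OF u(3)] k(1)
    by (simp add: X_def power_add algebra_simps)
  moreover have "\<not> f dvd X"
  proof
    assume "f dvd X"
    moreover have "f dvd f ^ k * cofactor p"
      using k(2) by (simp add: dvd_mult2)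
    ultimately have "f dvd cofactor q"
      unfolding X_def using dvd_add by fastforce
    with not_dvd_cofactor[OF u(3)] show False ..
  qed
  ultimately have qp: "forder (q - p) = forder q" "cofactor (q - p) = X"
    by (rule forder_cofactor_eqI)+
  have "q - p \<noteq> 0"
    using qp \<open>\<not> f dvd X\<close> by (auto simp: cofactor_def)
  moreover have "1 - u = Fract (q - p) q"
    using u by (simp add: One_fract_def)
  ultimately have "fval (1 - u) = 0" "fres (1 - u) \<approx>\<^sub>f rclass X - rclass (cofactor q)"
    using fval_fres_Fract[OF _ u(3), of "q - p"] qp by simp_all
  moreover have "X mod f = cofactor q mod f"
    using k(2) by (simp add: X_def mod_eq_dvd_iff)
  ultimately show "fval (1 - u) = 0" "fres (1 - u) \<approx>\<^sub>f 0"
    by (simp_all add: rclass_def)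
qed

lemma fval_fres_one_minus_neg:
  assumes "w \<noteq> 0" "fval w < 0"
  shows "fval (1 - w) = fval w" and "fres (1 - w) \<approx>\<^sub>f fres w"
proof -
  define y where "y = inverse w"
  have y: "y \<noteq> 0" "fval y > 0"
    using assms fval_fres_inverse(1) by (simp_all add: y_def)
  have y1: "fval (1 - y) = 0" "fres (1 - y) \<approx>\<^sub>f 0"
    using fval_fres_one_minus_pos[OF y] by simp_all
  have "1 - y \<noteq> 0"
    using y fval_fres_one(1) by auto
  have w: "1 - w = - 1 * w * (1 - y)"
    using assms by (simp add: y_def algebra_simps)
  have "fval (- 1 * w * (1 - y)) = fval (- 1 * w) + fval (1 - y)"
    using assms \<open>1 - y \<noteq> 0\<close> by (intro fval_mult) auto
  also have "fval (- 1 * w) = fval (- 1) + fval w"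
    using assms by (intro fval_mult) auto
  finally show "fval (1 - w) = fval w"
    unfolding w using y1 fval_fres_minus_one by simp
  have "fres (1 - w) \<approx>\<^sub>f fres (- 1 * w) + fres (1 - y)"
    unfolding w using assms \<open>1 - y \<noteq> 0\<close> by (intro fres_mult) auto
  also have "\<dots> \<approx>\<^sub>f (fres (- 1) + fres w) + 0"
    using assms by (intro span_cong_add fres_mult y1) auto
  also have "\<dots> \<approx>\<^sub>f (0 + fres w) + 0"
    by (intro span_cong_add fval_fres_minus_one span_cong_refl)
  finally show "fres (1 - w) \<approx>\<^sub>f fres w"
    by simp
qed

text \<open>The tame symbol at \<open>f\<close> modulo torsion: its sign \<open>(-1)\<^bsup>v(u) v(v)\<^esup>\<close> vanishes in
\<open>(F[t]/(f))\<^sup>* \<otimes> \<rat>\<close>.\<close>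

definition tame :: "'a poly fract \<times> 'a poly fract \<Rightarrow> 'a poly \<Rightarrow> rat" where
  "tame uv = (case uv of (u, v) \<Rightarrow> (\<lambda>z. of_int (fval v) * fres u z - of_int (fval u) * fres v z))"

lemma tame_cong:
  assumes "fres u \<approx>\<^sub>f a" "fres v \<approx>\<^sub>f b"
  shows "tame (u, v) \<approx>\<^sub>f (\<lambda>z. of_int (fval v) * a z - of_int (fval u) * b z)"
proof -
  have "tame (u, v) = (\<lambda>z. of_int (fval v) * fres u z) - (\<lambda>z. of_int (fval u) * fres v z)"
    by (simp add: tame_def fun_eq_iff)
  also have "\<dots> \<approx>\<^sub>f (\<lambda>z. of_int (fval v) * a z) - (\<lambda>z. of_int (fval u) * b z)"
    using assms by (intro span_cong_diff span_cong_scale)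
  finally show ?thesis
    by (simp add: fun_diff_def)
qed

lemma tame_steinberg:
  assumes "x \<noteq> 0" "x \<noteq> 1"
  shows "tame (x, 1 - x) \<approx>\<^sub>f 0"
proof -
  have "1 - x \<noteq> 0"
    using assms by simp
  consider (pos) "fval x > 0" | (neg) "fval x < 0" | (zero_pos) "fval x = 0" "fval (1 - x) > 0"
    | (zero_zero) "fval x = 0" "fval (1 - x) = 0" | (zero_neg) "fval x = 0" "fval (1 - x) < 0"
    by linarith
  then show ?thesis
  proof cases
    case pos
    then have "fval (1 - x) = 0" "fres (1 - x) \<approx>\<^sub>f 0"
      using fval_fres_one_minus_pos[OF assms(1)] by simp_all
    then show ?thesis
      using tame_cong[where u = x and v = "1 - x" and a = "fres x" and b = 0] by (simp add: zero_fun_def)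
  next
    case neg
    then have "fval (1 - x) = fval x" "fres (1 - x) \<approx>\<^sub>f fres x"
      using fval_fres_one_minus_neg[OF assms(1)] by simp_all
    then show ?thesis
      using tame_cong[where u = x and v = "1 - x" and a = "fres x" and b = "fres x"] by (simp add: zero_fun_def)
  next
    case zero_pos
    then have "fres x \<approx>\<^sub>f 0"
      using fval_fres_one_minus_pos(2)[OF \<open>1 - x \<noteq> 0\<close>] by simp
    then show ?thesis
      using tame_cong[where u = x and v = "1 - x" and a = 0 and b = "fres (1 - x)"] zero_pos by (simp add: zero_fun_def)
  next
    case zero_zero
    then show ?thesis
      by (simp add: tame_def zero_fun_def)
  next
    case zero_neg
    with fval_fres_one_minus_neg(1)[OF \<open>1 - x \<noteq> 0\<close>] show ?thesis
      by simp
  qed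
qed

definition V_reduced :: "'a poly fract set" where
  "V_reduced = V_gens (degree f - 1)"

lemma V_reducedE:
  assumes "g \<in> V_reduced"
  obtains p where "g = pfr p" "p \<noteq> 0" "degree p < degree f"
  using assms degree_f_pos by (auto simp: V_reduced_def V_gens_def)

lemma pfr_in_V_reduced: "p \<noteq> 0 \<Longrightarrow> degree p < degree f \<Longrightarrow> pfr p \<in> V_reduced"
  by (auto simp: V_reduced_def V_gens_def)

lemma tame_wedge_rel:
  assumes "z \<in> wedge_rel"
  shows "lin_ext tame z \<in> qspan residue_rel"
proof -
  consider (left) u v w where "z = bas (u * v, w) - bas (u, w) - bas (v, w)" "u \<noteq> 0" "v \<noteq> 0" "w \<noteq> 0"
    | (right) u v w where "z = bas (u, v * w) - bas (u, v) - bas (u, w)" "u \<noteq> 0" "v \<noteq> 0" "w \<noteq> 0"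
    | (diag) u where "z = bas (u, u)"
    using assms unfolding wedge_rel_def vsub_eq by blast
  then show ?thesis
  proof cases
    case left
    have "fres (u * v) - (fres u + fres v) \<in> qspan residue_rel"
      using left fres_mult[of u v] by (simp add: span_cong_def)
    then have "(\<lambda>x. of_int (fval w) * (fres (u * v) - (fres u + fres v)) x) \<in> qspan residue_rel"
      by (rule qspan_scale)
    moreover have "lin_ext tame z = (\<lambda>x. of_int (fval w) * (fres (u * v) - (fres u + fres v)) x)"
      unfolding left(1) using left(2-4)
      by (simp add: lin_ext_diff lin_ext_add tame_def fun_eq_iff fval_mult algebra_simps)
    ultimately show ?thesis
      by simp
  next
    case right
    have "fres (v * w) - (fres v + fres w) \<in> qspan residue_rel"
      using right fres_mult[of v w] by (simp add: span_cong_def)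
    then have "(\<lambda>x. - of_int (fval u) * (fres (v * w) - (fres v + fres w)) x) \<in> qspan residue_rel"
      by (rule qspan_scale)
    moreover have "lin_ext tame z = (\<lambda>x. - of_int (fval u) * (fres (v * w) - (fres v + fres w)) x)"
      unfolding right(1) using right(2-4)
      by (simp add: lin_ext_diff lin_ext_add tame_def fun_eq_iff fval_mult algebra_simps)
    ultimately show ?thesis
      by simp
  next
    case diag
    have "tame (u, u) = 0"
      by (simp add: tame_def fun_eq_iff)
    with diag show ?thesis
      by (metis lin_ext_bas qspan_zero)
  qed
qed

lemma fval_V_reduced: "g \<in> V_reduced \<Longrightarrow> fval g = 0"
  by (erule V_reducedE) (simp add: fval_fres_pfr not_dvd_small)

lemma tame_V_reduced: "g \<in> V_reduced \<Longrightarrow> h \<in> V_reduced \<Longrightarrow> tame (g, h) = 0"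
  by (simp add: tame_def fval_V_reduced fun_eq_iff)

lemma tame_wedge_gens_V_reduced:
  assumes "z \<in> qspan (wedge_gens V_reduced)"
  shows "lin_ext tame z \<in> qspan residue_rel"
  using _ assms
proof (rule lin_ext_qspan)
  fix u assume "u \<in> wedge_gens V_reduced"
  then consider (rel) "u \<in> wedge_rel" | (pair) g h where "u = bas (g, h)" "g \<in> V_reduced" "h \<in> V_reduced"
    unfolding wedge_gens_def by blast
  then show "fin_supp u \<and> lin_ext tame u \<in> qspan residue_rel"
  proof cases
    case pair
    then have "lin_ext tame u = 0"
      by (simp only: lin_ext_bas tame_V_reduced)
    with pair show ?thesis
      by (metis fin_supp_bas qspan_zero)
  qed (simp add: fin_supp_wedge_rel tame_wedge_rel)
qed

lemma tame_delta_gen: "lin_ext tame (delta_gen x) \<in> qspan residue_rel"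
proof (cases "\<exists>c. x = Some c \<and> c \<noteq> 0 \<and> c \<noteq> 1")
  case True
  then obtain c where "x = Some c" "c \<noteq> 0" "c \<noteq> 1"
    by blast
  then show ?thesis
    using tame_steinberg[of c] by (simp add: delta_gen_def span_cong_0_iff)
next
  case False
  then have "delta_gen x = 0"
    by (auto simp: delta_gen_def vzero_eq split: option.split)
  then show ?thesis
    by (simp add: qspan_zero)
qed

lemma tame_delta2: "fin_supp y \<Longrightarrow> lin_ext tame (delta2 y) \<in> qspan residue_rel"
  unfolding delta2_eq_lin_ext
  by (simp add: lin_ext_comp fin_supp_delta_gen lin_ext_in_qspan tame_delta_gen)

section \<open>Decomposition of \<open>B\<^sub>f\<close>\<close>

definition f_wedge :: "('a poly \<Rightarrow> rat) \<Rightarrow> 'a poly fract \<times> 'a poly fract \<Rightarrow> rat" where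
  "f_wedge s = lin_ext (\<lambda>p. bas (pfr f, pfr p)) s"

definition reduced_supp :: "('a poly \<Rightarrow> rat) \<Rightarrow> bool" where
  "reduced_supp s \<longleftrightarrow> fin_supp s \<and> (\<forall>p. s p \<noteq> 0 \<longrightarrow> p \<noteq> 0 \<and> degree p < degree f)"

lemma f_wedge_zero [simp]: "f_wedge 0 = 0"
  by (simp add: f_wedge_def)

lemma f_wedge_bas [simp]: "f_wedge (bas p) = bas (pfr f, pfr p)"
  by (simp add: f_wedge_def)

lemma f_wedge_add: "fin_supp s \<Longrightarrow> fin_supp t \<Longrightarrow> f_wedge (s + t) = f_wedge s + f_wedge t"
  unfolding f_wedge_def by (rule lin_ext_add)

lemma f_wedge_scale: "fin_supp s \<Longrightarrow> f_wedge (\<lambda>x. c * s x) = (\<lambda>z. c * f_wedge s z)"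
  unfolding f_wedge_def by (rule lin_ext_scale)

lemma fin_supp_f_wedge: "fin_supp s \<Longrightarrow> fin_supp (f_wedge s)"
  unfolding f_wedge_def by (rule fin_supp_lin_ext) simp_all

lemma reduced_supp_zero: "reduced_supp 0"
  by (simp add: reduced_supp_def)

lemma reduced_supp_bas: "p \<noteq> 0 \<Longrightarrow> degree p < degree f \<Longrightarrow> reduced_supp (bas p)"
  by (simp add: reduced_supp_def) (simp add: bas_def)

lemma reduced_supp_add:
  assumes "reduced_supp s" "reduced_supp t"
  shows "reduced_supp (s + t)"
proof -
  have "fin_supp (s + t)"
    using assms by (simp add: reduced_supp_def)
  moreover have "p \<noteq> 0 \<and> degree p < degree f" if "(s + t) p \<noteq> 0" for p
  proof -
    from that have "s p \<noteq> 0 \<or> t p \<noteq> 0"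
      by auto
    then show ?thesis
      using assms by (auto simp: reduced_supp_def)
  qed
  ultimately show ?thesis
    unfolding reduced_supp_def by blast
qed

lemma reduced_supp_scale: "reduced_supp s \<Longrightarrow> reduced_supp (\<lambda>x. c * s x)"
  by (auto simp: reduced_supp_def)

lemma tame_f_wedge:
  assumes "reduced_supp s"
  shows "lin_ext tame (f_wedge s) \<approx>\<^sub>f - s"
proof -
  have fin: "fin_supp s"
    using assms by (simp add: reduced_supp_def)
  have "lin_ext tame (f_wedge s) = lin_ext (\<lambda>p. tame (pfr f, pfr p)) s"
    unfolding f_wedge_def using fin by (simp add: lin_ext_comp)
  also have "\<dots> \<approx>\<^sub>f lin_ext (\<lambda>p. - bas p) s"
  proof (rule lin_ext_span_cong[OF fin])
    fix p assume "s p \<noteq> 0"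
    then have p: "\<not> f dvd p" "p mod f = p"
      using assms by (auto simp: reduced_supp_def not_dvd_small mod_poly_less)
    have "tame (pfr f, pfr p) = - fres (pfr p)"
      using p by (simp add: tame_def fval_fres_pfr fval_fres_pfr_f fun_eq_iff)
    also have "\<dots> \<approx>\<^sub>f - rclass p"
      using p by (intro span_cong_uminus fval_fres_pfr)
    finally show "tame (pfr f, pfr p) \<approx>\<^sub>f - bas p"
      using p by (simp add: rclass_def)
  qed
  also have "lin_ext (\<lambda>p. - bas p) s = - s"
    using fin by (simp add: lin_ext_uminus_fun lin_ext_bas_self)
  finally show ?thesis .
qed

definition decomposable :: "('a poly fract \<times> 'a poly fract \<Rightarrow> rat) \<Rightarrow> bool" where
  "decomposable z \<longleftrightarrow>
     (\<exists>w s. z = w + f_wedge s \<and> w \<in> qspan (wedge_gens V_reduced) \<and> reduced_supp s)"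

lemma decomposableI:
  "z = w + f_wedge s \<Longrightarrow> w \<in> qspan (wedge_gens V_reduced) \<Longrightarrow> reduced_supp s \<Longrightarrow> decomposable z"
  unfolding decomposable_def by blast

lemma decomposable_wedge_gens_V_reduced: "z \<in> qspan (wedge_gens V_reduced) \<Longrightarrow> decomposable z"
  by (rule decomposableI[of z z 0]) (simp_all add: reduced_supp_zero)

lemma decomposable_add:
  assumes "decomposable u" "decomposable v"
  shows "decomposable (u + v)"
proof -
  obtain w1 s1 w2 s2 where ws: "u = w1 + f_wedge s1" "w1 \<in> qspan (wedge_gens V_reduced)"
    "reduced_supp s1" "v = w2 + f_wedge s2" "w2 \<in> qspan (wedge_gens V_reduced)" "reduced_supp s2"
    using assms unfolding decomposable_def by blast
  then have "u + v = (w1 + w2) + f_wedge (s1 + s2)"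
    by (simp add: f_wedge_add reduced_supp_def algebra_simps)
  with ws show ?thesis
    by (blast intro: decomposableI qspan_add reduced_supp_add)
qed

lemma decomposable_scale:
  assumes "decomposable u"
  shows "decomposable (\<lambda>x. c * u x)"
proof -
  obtain w s where ws: "u = w + f_wedge s" "w \<in> qspan (wedge_gens V_reduced)" "reduced_supp s"
    using assms unfolding decomposable_def by blast
  then have "(\<lambda>x. c * u x) = (\<lambda>x. c * w x) + f_wedge (\<lambda>x. c * s x)"
    by (simp add: f_wedge_scale reduced_supp_def fun_eq_iff algebra_simps)
  with ws show ?thesis
    by (blast intro: decomposableI qspan_scale reduced_supp_scale)
qed

lemma decomposable_f_wedge_bas:
  "p \<noteq> 0 \<Longrightarrow> degree p < degree f \<Longrightarrow> decomposable (bas (pfr f, pfr p))"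
  by (rule decomposableI[of _ 0 "bas p"]) (simp_all add: qspan_zero reduced_supp_bas)

lemma decomposable_bas_f:
  assumes "p \<noteq> 0" "degree p < degree f"
  shows "decomposable (bas (pfr p, pfr f))"
proof (rule decomposableI)
  have "f_wedge (\<lambda>x. - 1 * bas p x) = - bas (pfr f, pfr p)"
    using f_wedge_scale[of "bas p" "- 1"] by (simp add: fun_eq_iff)
  then show "bas (pfr p, pfr f) = (bas (pfr p, pfr f) + bas (pfr f, pfr p)) + f_wedge (\<lambda>x. - 1 * bas p x)"
    by simp
  show "bas (pfr p, pfr f) + bas (pfr f, pfr p) \<in> qspan (wedge_gens V_reduced)"
    using assms f_nonzero wedge_antisym[of "pfr p" "pfr f"] wedge_rel_subset_wedge_gens pfr_nonzero
    by (auto simp: span_cong_0_iff)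
  show "reduced_supp (\<lambda>x. - 1 * bas p x)"
    using assms by (intro reduced_supp_scale reduced_supp_bas)
qed

lemma decomposable_wedge_gens_Vf_gens:
  assumes "z \<in> wedge_gens (Vf_gens f)"
  shows "decomposable z"
proof -
  consider (rel) "z \<in> wedge_rel" | (pair) g h where "z = bas (g, h)" "g \<in> Vf_gens f" "h \<in> Vf_gens f"
    using assms unfolding wedge_gens_def by blast
  then show ?thesis
  proof cases
    case rel
    then show ?thesis
      using wedge_rel_subset_wedge_gens decomposable_wedge_gens_V_reduced qspan.gen by blast
  next
    case pair
    then consider (both_V) "g \<in> V_reduced" "h \<in> V_reduced" | (ff) "g = pfr f" "h = pfr f"
      | (fp) p where "g = pfr f" "h = pfr p" "p \<noteq> 0" "degree p < degree f"
      | (pf) p where "g = pfr p" "h = pfr f" "p \<noteq> 0" "degree p < degree f"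
      unfolding Vf_gens_def V_reduced_def[symmetric] by (blast elim: V_reducedE)
    then show ?thesis
    proof cases
      case both_V
      then show ?thesis
        using pair decomposable_wedge_gens_V_reduced bas_in_wedge_gens by blast
    next
      case ff
      have "bas (pfr f, pfr f) \<in> qspan (wedge_gens V_reduced)"
        using wedge_self[OF pfr_nonzero[OF f_nonzero]] wedge_rel_subset_wedge_gens
        by (auto simp: span_cong_0_iff)
      with pair ff show ?thesis
        by (simp add: decomposable_wedge_gens_V_reduced)
    qed (use pair decomposable_f_wedge_bas decomposable_bas_f in simp_all)
  qed
qed

lemma decompose_wedge_gens_Vf:
  assumes "z \<in> qspan (wedge_gens (Vf_gens f))"
  obtains w s where "z = w + f_wedge s" "w \<in> qspan (wedge_gens V_reduced)" "reduced_supp s"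
proof -
  have "qspan (wedge_gens (Vf_gens f)) \<subseteq> Collect decomposable"
    by (rule qspan_minimal)
       (auto intro: decomposable_wedge_gens_Vf_gens decomposable_wedge_gens_V_reduced qspan_zero
         decomposable_add decomposable_scale)
  with assms that show ?thesis
    unfolding decomposable_def by blast
qed

lemma reduced_in_residue_span:
  assumes "fin_supp y" "delta2 y = w + f_wedge s" "w \<in> qspan (wedge_gens V_reduced)" "reduced_supp s"
  shows "s \<in> qspan residue_rel"
proof -
  have "fin_supp w" "fin_supp (f_wedge s)"
    using assms by (auto simp: reduced_supp_def intro: fin_supp_wedge_gens fin_supp_f_wedge)
  then have "lin_ext tame (f_wedge s) = lin_ext tame (delta2 y) - lin_ext tame w"
    using assms(2) by (simp add: lin_ext_add)
  also have "\<dots> \<in> qspan residue_rel"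
    using assms by (intro qspan_diff tame_delta2 tame_wedge_gens_V_reduced)
  finally have "- s \<in> qspan residue_rel"
    using span_cong_mem[OF span_cong_sym[OF tame_f_wedge[OF assms(4)]]] by blast
  then show ?thesis
    using qspan_uminus by fastforce
qed

lemma f_wedge_mult_relation:
  assumes "a \<noteq> 0" "b \<noteq> 0"
  shows "f_wedge (bas a + bas b - bas (a * b)) \<in> qspan wedge_rel"
proof -
  have "f_wedge (bas a + bas b - bas (a * b))
      = - (bas (pfr f, pfr a * pfr b) - (bas (pfr f, pfr a) + bas (pfr f, pfr b)))"
    by (simp add: f_wedge_def lin_ext_add lin_ext_diff pfr_mult)
  also have "\<dots> \<in> qspan wedge_rel"
    using assms f_nonzero
    by (intro qspan_uminus wedge_mult_right[unfolded span_cong_def] pfr_nonzero)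
  finally show ?thesis .
qed

lemma x_f_relation:
  assumes a: "a \<noteq> 0" "degree a < degree f" and b: "b \<noteq> 0" "degree b < degree f"
  shows "f_wedge (bas a + bas b - bas (a * b mod f)) + delta_gen (Some (x_f f a b))
    \<in> qspan (wedge_gens V_reduced)"
proof -
  define r where "r = a * b mod f"
  define q where "q = a * b div f"
  define A B R F where "A = pfr a" and "B = pfr b" and "R = pfr r" and "F = pfr f"
  have "\<not> f dvd a * b"
    using a b by (intro not_dvd_mult_small)
  then have r: "r \<noteq> 0" "degree r < degree f"
    unfolding r_def by (simp_all add: mod_f_nonzero degree_mod_f)
  have in_V: "A \<in> V_reduced" "B \<in> V_reduced" "R \<in> V_reduced"
    using a b r by (simp_all add: A_def B_def R_def pfr_in_V_reduced)
  have nonzero: "A \<noteq> 0" "B \<noteq> 0" "R \<noteq> 0" "F \<noteq> 0"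
    using a b r f_nonzero by (simp_all add: A_def B_def R_def F_def pfr_nonzero)
  have AB: "A * B = pfr q * F + R"
    unfolding A_def B_def R_def F_def q_def r_def by (simp flip: pfr_mult pfr_add)
  have x: "x_f f a b = A * B / R"
    by (simp add: x_f_def A_def B_def R_def r_def pfr_mult)
  show ?thesis
  proof (cases "q = 0")
    case True
    then have "r = a * b"
      using div_mult_mod_eq[of "a * b" f] by (simp add: q_def r_def)
    moreover have "x_f f a b = 1"
      using True AB nonzero by (simp add: x)
    ultimately have "a * b mod f = a * b" "delta_gen (Some (x_f f a b)) = 0"
      by (simp_all add: r_def delta_gen_def vzero_eq)
    then show ?thesis
      using f_wedge_mult_relation[OF a(1) b(1)] wedge_rel_subset_wedge_gens by auto
  next
    case False
    define Q where "Q = pfr (- q)"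
    have Q: "Q \<in> V_reduced" "Q \<noteq> 0"
      using False degree_mult_div_less[OF a(2) b(2)]
      by (simp_all add: Q_def q_def pfr_in_V_reduced pfr_nonzero)
    have one_minus_x: "1 - A * B / R = Q * F / R"
      using AB nonzero by (simp add: Q_def pfr_uminus field_simps)
    have "Q * F / R \<noteq> 0"
      using nonzero Q by simp
    then have "A * B / R \<noteq> 0" "A * B / R \<noteq> 1"
      using nonzero one_minus_x by auto
    then have "delta_gen (Some (x_f f a b)) = bas (A * B / R, Q * F / R)"
      by (simp only: x delta_gen_def one_minus_x option.case if_True simp_thms)
    moreover have "f_wedge (bas a + bas b - bas r) = bas (F, A) + bas (F, B) - bas (F, R)"
      by (simp add: f_wedge_def lin_ext_add lin_ext_diff A_def B_def R_def F_def)
    ultimately have "f_wedge (bas a + bas b - bas r) + delta_gen (Some (x_f f a b))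
        \<approx>\<^sub>\<and> bas (A, Q) + bas (B, Q) + bas (Q, R) + bas (R, A) + bas (R, B)"
      using wedge_ratio_common_factor[of A B R F Q] nonzero Q by simp
    moreover have "bas (A, Q) + bas (B, Q) + bas (Q, R) + bas (R, A) + bas (R, B)
        \<in> qspan (wedge_gens V_reduced)"
      using in_V Q by (intro qspan_add bas_in_wedge_gens)
    ultimately show ?thesis
      unfolding r_def by (blast intro: span_cong_mem span_cong_wedge_gens)
  qed
qed

definition x_f_gens :: "('a poly fract option \<Rightarrow> rat) set" where
  "x_f_gens = {bas (Some (x_f f a b)) | a b.
     a \<noteq> 0 \<and> b \<noteq> 0 \<and> degree a < degree f \<and> degree b < degree f}"

lemma fin_supp_x_f_gens_span: "e \<in> qspan x_f_gens \<Longrightarrow> fin_supp e"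
  by (rule fin_supp_qspan) (auto simp: x_f_gens_def)

definition liftable :: "('a poly \<Rightarrow> rat) \<Rightarrow> bool" where
  "liftable s \<longleftrightarrow>
     fin_supp s \<and> (\<exists>e \<in> qspan x_f_gens. f_wedge s + delta2 e \<in> qspan (wedge_gens V_reduced))"

lemma liftable_residue_rel: "s \<in> residue_rel \<Longrightarrow> liftable s"
proof -
  assume "s \<in> residue_rel"
  then obtain a b where s: "s = bas a + bas b - bas (a * b mod f)" and ab: "a \<noteq> 0" "b \<noteq> 0"
    "degree a < degree f" "degree b < degree f"
    unfolding residue_rel_def by blast
  have "bas (Some (x_f f a b)) \<in> qspan x_f_gens"
    unfolding x_f_gens_def using ab by (blast intro: qspan.gen)
  moreover have "f_wedge s + delta2 (bas (Some (x_f f a b))) \<in> qspan (wedge_gens V_reduced)"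
    using x_f_relation[OF ab(1,3) ab(2,4)] s by simp
  moreover have "fin_supp s"
    using s by simp
  ultimately show "liftable s"
    unfolding liftable_def by blast
qed

lemma liftable_zero: "liftable 0"
  unfolding liftable_def using qspan_zero[of x_f_gens] qspan_zero[of "wedge_gens V_reduced"]
  by (intro conjI bexI[of _ 0]) simp_all

lemma liftable_add:
  assumes "liftable u" "liftable v"
  shows "liftable (u + v)"
proof -
  obtain e1 e2 where e: "e1 \<in> qspan x_f_gens" "f_wedge u + delta2 e1 \<in> qspan (wedge_gens V_reduced)"
    "e2 \<in> qspan x_f_gens" "f_wedge v + delta2 e2 \<in> qspan (wedge_gens V_reduced)"
    using assms by (auto simp: liftable_def)
  have "f_wedge (u + v) + delta2 (e1 + e2) = (f_wedge u + delta2 e1) + (f_wedge v + delta2 e2)"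
    using assms e fin_supp_x_f_gens_span by (simp add: liftable_def f_wedge_add delta2_add)
  then have "f_wedge (u + v) + delta2 (e1 + e2) \<in> qspan (wedge_gens V_reduced)"
    using qspan_add[OF e(2) e(4)] by (simp only:)
  moreover have "e1 + e2 \<in> qspan x_f_gens"
    using e by (intro qspan_add)
  ultimately show ?thesis
    using assms unfolding liftable_def by blast
qed

lemma liftable_scale:
  assumes "liftable u"
  shows "liftable (\<lambda>x. c * u x)"
proof -
  obtain e where e: "e \<in> qspan x_f_gens" "f_wedge u + delta2 e \<in> qspan (wedge_gens V_reduced)"
    using assms by (auto simp: liftable_def)
  have "f_wedge (\<lambda>x. c * u x) + delta2 (\<lambda>x. c * e x) = (\<lambda>z. c * (f_wedge u + delta2 e) z)"
    using assms e fin_supp_x_f_gens_span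
    by (simp add: liftable_def f_wedge_scale delta2_scale fun_eq_iff algebra_simps)
  then have "f_wedge (\<lambda>x. c * u x) + delta2 (\<lambda>x. c * e x) \<in> qspan (wedge_gens V_reduced)"
    using qspan_scale[OF e(2), of c] by (simp only:)
  moreover have "(\<lambda>x. c * e x) \<in> qspan x_f_gens"
    using e by (intro qspan_scale)
  ultimately show ?thesis
    using assms unfolding liftable_def by blast
qed

lemma residue_rel_lift:
  assumes "s \<in> qspan residue_rel"
  obtains e where "e \<in> qspan x_f_gens" "f_wedge s + delta2 e \<in> qspan (wedge_gens V_reduced)"
proof -
  have "qspan residue_rel \<subseteq> Collect liftable"
    by (rule qspan_minimal) (auto intro: liftable_residue_rel liftable_zero liftable_add liftable_scale)
  with assms that show ?thesis
    unfolding liftable_def by blast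
qed

lemma V_reduced_subset_Vf_gens: "V_reduced \<subseteq> Vf_gens f"
  by (auto simp: Vf_gens_def V_reduced_def)

lemma x_f_gens_subset_B_sub: "x_f_gens \<subseteq> B_sub (Vf_gens f)"
proof
  fix e assume "e \<in> x_f_gens"
  then obtain a b where e: "e = bas (Some (x_f f a b))" and ab: "a \<noteq> 0" "b \<noteq> 0"
    "degree a < degree f" "degree b < degree f"
    unfolding x_f_gens_def by blast
  let ?s = "bas a + bas b - bas (a * b mod f)"
  let ?W = "qspan (wedge_gens (Vf_gens f))"
  have "\<not> f dvd a * b"
    using ab by (intro not_dvd_mult_small)
  then have "pfr a \<in> Vf_gens f" "pfr b \<in> Vf_gens f" "pfr (a * b mod f) \<in> Vf_gens f"
    using ab V_reduced_subset_Vf_gens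
    by (auto intro!: pfr_in_V_reduced simp: mod_f_nonzero degree_mod_f)
  moreover have "pfr f \<in> Vf_gens f"
    by (simp add: Vf_gens_def)
  ultimately have "f_wedge ?s \<in> ?W"
    by (simp add: f_wedge_def lin_ext_add lin_ext_diff qspan_add qspan_diff bas_in_wedge_gens)
  moreover have "f_wedge ?s + delta2 e \<in> ?W"
    using x_f_relation[OF ab(1,3) ab(2,4)] wedge_gens_mono[OF V_reduced_subset_Vf_gens] e by auto
  ultimately have "delta2 e \<in> ?W"
    using qspan_diff by fastforce
  then show "e \<in> B_sub (Vf_gens f)"
    by (simp add: B_sub_def in_wedge2_iff e)
qed

lemma B_sub_Vf_gens_subset:
  "B_sub (Vf_gens f) \<subseteq> qspan (R2_gens \<union> B_sub V_reduced \<union> x_f_gens)"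
proof
  fix y assume "y \<in> B_sub (Vf_gens f)"
  then have y: "fin_supp y" "delta2 y \<in> qspan (wedge_gens (Vf_gens f))"
    by (simp_all add: B_sub_def in_wedge2_iff)
  obtain w s where ws: "delta2 y = w + f_wedge s" "w \<in> qspan (wedge_gens V_reduced)" "reduced_supp s"
    using decompose_wedge_gens_Vf[OF y(2)] .
  obtain e where e: "e \<in> qspan x_f_gens" "f_wedge s + delta2 e \<in> qspan (wedge_gens V_reduced)"
    using residue_rel_lift[OF reduced_in_residue_span[OF y(1) ws]] .
  have "fin_supp e"
    using e(1) by (rule fin_supp_x_f_gens_span)
  then have "delta2 (y + e) = w + (f_wedge s + delta2 e)"
    using y ws by (simp add: delta2_add)
  then have "y + e \<in> B_sub V_reduced"
    using y \<open>fin_supp e\<close> ws e by (simp add: B_sub_def in_wedge2_iff qspan_add)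
  then have "y + e \<in> qspan (R2_gens \<union> B_sub V_reduced \<union> x_f_gens)"
    by (blast intro: qspan.gen)
  moreover have "e \<in> qspan (R2_gens \<union> B_sub V_reduced \<union> x_f_gens)"
    using qspan_mono[of x_f_gens] e(1) by blast
  ultimately show "y \<in> qspan (R2_gens \<union> B_sub V_reduced \<union> x_f_gens)"
    using qspan_diff by fastforce
qed

lemma span_subset_B_sub_Vf_gens:
  "qspan (R2_gens \<union> B_sub V_reduced \<union> x_f_gens) \<subseteq> B_sub (Vf_gens f)"
proof -
  have "R2_gens \<union> B_sub V_reduced \<union> x_f_gens \<subseteq> B_sub (Vf_gens f)"
    using R2_gens_subset_B_sub B_sub_mono[OF V_reduced_subset_Vf_gens] x_f_gens_subset_B_sub
    by blast
  then show ?thesis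
    using qspan_mono qspan_B_sub_subset by blast
qed

theorem B_sub_Vf_gens_eq: "B_sub (Vf_gens f) = qspan (R2_gens \<union> B_sub V_reduced \<union> x_f_gens)"
  using B_sub_Vf_gens_subset span_subset_B_sub_Vf_gens by (rule equalityI)

end

theorem corollary3:
  fixes f :: "'a::field poly"
  assumes "lead_coeff f = 1" and "irreducible f" and "degree f \<ge> 1"
  shows "B_sub (Vf_gens f) =
           qspan (R2_gens \<union> B_sub (V_gens (degree f - 1)) \<union>
                  {bas (Some (x_f f a b)) | a b. a \<noteq> 0 \<and> b \<noteq> 0 \<and> degree a < degree f \<and> degree b < degree f})"
proof -
  interpret irreducible_poly f
    using assms(2) by unfold_locales
  show ?thesis
    using B_sub_Vf_gens_eq unfolding V_reduced_def x_f_gens_def .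
qed

end
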